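(* Let $P\subseteq\{3,4,5,\ldots\}$ (so $\infty\notin P$). The family $\mathcal{G}_P$ satisfies the projective amalgamation property: for all $A,B,C\in\mathcal{G}_P$ and epimorphisms $f\colon B\to A$, $g\colon C\to A$ in $\mathcal{G}_P$ there exist $D\in\mathcal{G}_P$ and epimorphisms $h_1\colon D\to B$, $h_2\colon D\to C$ in $\mathcal{G}_P$ with $f\circ h_1=g\circ h_2$. Consequently $\mathcal{G}_P$ is a projective Fraïssé family.
   Context: Graphs are finite with reflexive symmetric edge relations. An epimorphism $f\colon B\to A$ is a surjection such that $\langle a_1,a_2\rangle$ is an edge of $A$ iff there are $b_i\in f^{-1}(a_i)$ forming an edge of $B$; it is monotone if every fibre induces a connected subgraph. A finite tree is a finite connected graph without cycles of nontrivial edges; $\mathrm{ord}(a)$ is the number of neighbours of $a$ other than itself. For a monotone epimorphism $f\colon B\to A$ of finite trees and $a\in A$ with $\mathrm{ord}(a)=n\ge3$, $a$ is a point of coherence of $f$ if there is $b\in f^{-1}(a)$ with $\mathrm{ord}(b)=n$ and a bijection $p$ between the components $A_0,\dots,A_{n-1}$ of $A\setminus\{a\}$ and the components of $B\setminus\{b\}$ with $f^{-1}(A_i)\subseteq p(A_i)$; $f$ is coherent if every vertex of order at least $3$ is a point of coherence. $\mathcal{G}_P$ is the class of finite trees each of whose vertices either is an endpoint (order at most $1$) or has order in $P$, with the monotone coherent epimorphisms between them. A projective Fraïssé family is a class of finite graphs with a distinguished class of epimorphisms, having countably many members up to isomorphism, containing identities, closed under composition, and satisfying joint projection (any two members are images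 of a common member under distinguished epimorphisms) and projective amalgamation. *)

theory Defs
  imports Main "HOL-Library.Countable_Set"
begin

text \<open>A finite graph: vertex set and a reflexive symmetric edge relation on it.
  Vertices are natural numbers (every finite graph is isomorphic to one of this form).\<close>
type_synonym graph = "nat set \<times> (nat \<times> nat) set"

definition verts :: "graph \<Rightarrow> nat set" where "verts G = fst G"
definition edges :: "graph \<Rightarrow> (nat \<times> nat) set" where "edges G = snd G"

definition is_graph :: "graph \<Rightarrow> bool" where
  "is_graph G \<longleftrightarrow> finite (verts G) \<and> edges G \<subseteq> verts G \<times> verts G
     \<and> (\<forall>v\<in>verts G. (v, v) \<in> edges G)
     \<and> (\<forall>u v. (u, v) \<in> edges G \<longrightarrow> (v, u) \<in> edges G)"

text \<open>Epimorphism \<open>f : B \<rightarrow> A\<close> (only its values on \<open>verts B\<close> matter).\<close>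
definition epi :: "graph \<Rightarrow> graph \<Rightarrow> (nat \<Rightarrow> nat) \<Rightarrow> bool" where
  "epi B A f \<longleftrightarrow> f ` verts B = verts A \<and>
     (\<forall>a1\<in>verts A. \<forall>a2\<in>verts A. (a1, a2) \<in> edges A \<longleftrightarrow>
        (\<exists>b1\<in>verts B. \<exists>b2\<in>verts B. f b1 = a1 \<and> f b2 = a2 \<and> (b1, b2) \<in> edges B))"

definition induced_rel :: "graph \<Rightarrow> nat set \<Rightarrow> (nat \<times> nat) set" where
  "induced_rel G S = edges G \<inter> (S \<times> S)"

definition connected_in :: "graph \<Rightarrow> nat set \<Rightarrow> bool" where
  "connected_in G S \<longleftrightarrow> S \<noteq> {} \<and> S \<subseteq> verts G \<and>
     (\<forall>x\<in>S. \<forall>y\<in>S. (x, y) \<in> (induced_rel G S)\<^sup>*)"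

definition components :: "graph \<Rightarrow> nat set \<Rightarrow> nat set set" where
  "components G S = {{y \<in> S. (x, y) \<in> (induced_rel G S)\<^sup>*} | x. x \<in> S}"

definition monotone_epi :: "graph \<Rightarrow> graph \<Rightarrow> (nat \<Rightarrow> nat) \<Rightarrow> bool" where
  "monotone_epi B A f \<longleftrightarrow> epi B A f \<and>
     (\<forall>a\<in>verts A. connected_in B {b \<in> verts B. f b = a})"

definition has_cycle :: "graph \<Rightarrow> bool" where
  "has_cycle G \<longleftrightarrow> (\<exists>vs. length vs \<ge> 3 \<and> distinct vs \<and> set vs \<subseteq> verts G \<and>
     (\<forall>i < length vs. (vs ! i, vs ! ((i + 1) mod length vs)) \<in> edges G))"

definition is_tree :: "graph \<Rightarrow> bool" where
  "is_tree G \<longleftrightarrow> is_graph G \<and> connected_in G (verts G) \<and> \<not> has_cycle G"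

definition ord :: "graph \<Rightarrow> nat \<Rightarrow> nat" where
  "ord G a = card {b \<in> verts G. b \<noteq> a \<and> (a, b) \<in> edges G}"

definition point_of_coherence :: "graph \<Rightarrow> graph \<Rightarrow> (nat \<Rightarrow> nat) \<Rightarrow> nat \<Rightarrow> bool" where
  "point_of_coherence B A f a \<longleftrightarrow> a \<in> verts A \<and> ord A a \<ge> 3 \<and>
     (\<exists>b\<in>verts B. f b = a \<and> ord B b = ord A a \<and>
        (\<exists>p. bij_betw p (components A (verts A - {a})) (components B (verts B - {b})) \<and>
             (\<forall>Ai\<in>components A (verts A - {a}). {x \<in> verts B. f x \<in> Ai} \<subseteq> p Ai)))"

definition coherent :: "graph \<Rightarrow> graph \<Rightarrow> (nat \<Rightarrow> nat) \<Rightarrow> bool" where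
  "coherent B A f \<longleftrightarrow> (\<forall>a\<in>verts A. ord A a \<ge> 3 \<longrightarrow> point_of_coherence B A f a)"

definition GP :: "nat set \<Rightarrow> graph set" where
  "GP P = {T. is_tree T \<and> (\<forall>v\<in>verts T. ord T v \<le> 1 \<or> ord T v \<in> P)}"

definition GP_mor :: "nat set \<Rightarrow> graph \<Rightarrow> graph \<Rightarrow> (nat \<Rightarrow> nat) \<Rightarrow> bool" where
  "GP_mor P B A f \<longleftrightarrow> B \<in> GP P \<and> A \<in> GP P \<and> monotone_epi B A f \<and> coherent B A f"

definition graph_iso :: "graph \<Rightarrow> graph \<Rightarrow> bool" where
  "graph_iso G H \<longleftrightarrow> (\<exists>h. bij_betw h (verts G) (verts H) \<and>
     (\<forall>x\<in>verts G. \<forall>y\<in>verts G. (x, y) \<in> edges G \<longleftrightarrow> (h x, h y) \<in> edges H))"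

definition proj_amalgamation :: "graph set \<Rightarrow> (graph \<Rightarrow> graph \<Rightarrow> (nat \<Rightarrow> nat) \<Rightarrow> bool) \<Rightarrow> bool" where
  "proj_amalgamation C M \<longleftrightarrow> (\<forall>A\<in>C. \<forall>B\<in>C. \<forall>C'\<in>C. \<forall>f g. M B A f \<and> M C' A g \<longrightarrow>
     (\<exists>D\<in>C. \<exists>h1 h2. M D B h1 \<and> M D C' h2 \<and> (\<forall>d\<in>verts D. f (h1 d) = g (h2 d))))"

definition proj_fraisse_family :: "graph set \<Rightarrow> (graph \<Rightarrow> graph \<Rightarrow> (nat \<Rightarrow> nat) \<Rightarrow> bool) \<Rightarrow> bool" where
  "proj_fraisse_family C M \<longleftrightarrow>
     (\<forall>G\<in>C. is_graph G) \<and>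
     (\<forall>B A f. M B A f \<longrightarrow> B \<in> C \<and> A \<in> C \<and> epi B A f) \<and>
     (\<exists>S. countable S \<and> S \<subseteq> C \<and> (\<forall>A\<in>C. \<exists>A'\<in>S. graph_iso A A')) \<and>
     (\<forall>A\<in>C. M A A id) \<and>
     (\<forall>A B D f g. M B A f \<and> M D B g \<longrightarrow> M D A (f \<circ> g)) \<and>
     (\<forall>A\<in>C. \<forall>B\<in>C. \<exists>D\<in>C. \<exists>f g. M D A f \<and> M D B g) \<and>
     proj_amalgamation C M"

end

theory Submission
  imports Defs "HOL-Library.Transitive_Closure_Table"
begin

text \<open>
  Given \<open>f : B \<rightarrow> A\<close> and \<open>g : C \<rightarrow> A\<close>, we may assume that \<open>A\<close> has no isolated vertex: a
  one-point \<open>A\<close> is replaced by the edge graph, onto which every tree with at least two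
  vertices maps.
  Then \<open>A\<close> has only end points and branch points, and over each \<open>a\<close> we choose a hub in the
  fibre of \<open>g\<close>: a point of coherence of \<open>g\<close> if \<open>a\<close> is a branch point, an end vertex of the
  fibre if \<open>a\<close> is an end point. The amalgam \<open>D\<close> is \<open>B\<close> with the fibres of \<open>g\<close> glued in: the
  hub over \<open>a\<close> is identified with the fibre of \<open>f\<close> over \<open>a\<close>, and every other vertex of the
  fibre of \<open>g\<close> is attached to the vertex of \<open>B\<close> through which the fibre of \<open>f\<close> is left
  towards the neighbour of \<open>a\<close> that its branch points to. Since over every edge of a tree
  there is exactly one edge of a monotone preimage tree, every edge of \<open>D\<close> is a bridge pulled
  back from \<open>B\<close> or \<open>C\<close>, so \<open>D\<close> is a tree; its vertices have the orders of their images in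
  \<open>B\<close> (on the copy of \<open>B\<close>) or in \<open>C\<close> (elsewhere), so \<open>D\<close> lies in \<open>\<G>_P\<close>; and removing a
  lifted point of coherence separates the preimages of its neighbours, which yields coherence
  of both projections.
\<close>

section \<open>Walks and cycles\<close>

abbreviation walk :: "('a \<times> 'a) set \<Rightarrow> 'a list \<Rightarrow> bool" where
  "walk R \<equiv> successively (\<lambda>x y. (x, y) \<in> R)"

lemma walk_rtrancl: "walk R ys \<Longrightarrow> ys \<noteq> [] \<Longrightarrow> (hd ys, last ys) \<in> R\<^sup>*"
  by (induction ys rule: induct_list012) (auto intro: converse_rtrancl_into_rtrancl)

lemma rtrancl_path_walk:
  "rtrancl_path (\<lambda>a b. (a, b) \<in> R) x xs y \<Longrightarrow> walk R (x # xs) \<and> last (x # xs) = y"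
proof (induction rule: rtrancl_path.induct)
  case (step x y ys z)
  then show ?case by (cases ys) auto
qed simp

lemma rtrancl_distinct_walk:
  assumes "(x, y) \<in> R\<^sup>*"
  obtains ys where "ys \<noteq> []" "hd ys = x" "last ys = y" "distinct ys" "walk R ys"
proof -
  have "(\<lambda>a b. (a, b) \<in> R)\<^sup>*\<^sup>* x y" using assms by (simp add: rtranclp_rtrancl_eq)
  then obtain xs where "rtrancl_path (\<lambda>a b. (a, b) \<in> R) x xs y"
    by (auto simp: rtranclp_eq_rtrancl_path)
  then obtain xs' where p: "rtrancl_path (\<lambda>a b. (a, b) \<in> R) x xs' y" "distinct (x # xs')"
    by (rule rtrancl_path_distinct)
  from rtrancl_path_walk[OF p(1)] p(2) show ?thesis by (intro that[of "x # xs'"]) auto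
qed

lemma distinct_hd_eq_last: "distinct xs \<Longrightarrow> xs \<noteq> [] \<Longrightarrow> hd xs = last xs \<Longrightarrow> xs = [hd xs]"
  by (cases xs rule: rev_cases) (auto simp: hd_append split: if_splits)

lemma has_cycle_closed_walk:
  assumes "distinct ys" "3 \<le> length ys" "walk (edges G) ys" "(last ys, hd ys) \<in> edges G"
    "set ys \<subseteq> verts G"
  shows "has_cycle G"
  unfolding has_cycle_def
proof (intro exI[of _ ys] conjI allI impI)
  fix i assume i: "i < length ys"
  show "(ys ! i, ys ! ((i + 1) mod length ys)) \<in> edges G"
  proof (cases "Suc i < length ys")
    case True
    then show ?thesis using successively_nth[OF assms(3) True] by simp
  next
    case False
    then have "i = length ys - 1" "ys \<noteq> []" using i by auto
    then show ?thesis
      using assms(2,4) by (simp add: last_conv_nth hd_conv_nth)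
  qed
qed (use assms in auto)

lemma has_cycle_card: "has_cycle G \<Longrightarrow> finite (verts G) \<Longrightarrow> 3 \<le> card (verts G)"
  unfolding has_cycle_def by (metis card_mono distinct_card le_trans)

definition nbrs :: "graph \<Rightarrow> nat \<Rightarrow> nat set" where
  "nbrs G a = {b \<in> verts G. b \<noteq> a \<and> (a, b) \<in> edges G}"

lemma ord_eq_card_nbrs: "ord G a = card (nbrs G a)"
  unfolding ord_def nbrs_def ..

lemma is_graphD:
  assumes "is_graph G"
  shows "finite (verts G)" "\<And>x y. (x, y) \<in> edges G \<Longrightarrow> x \<in> verts G \<and> y \<in> verts G"
    "\<And>v. v \<in> verts G \<Longrightarrow> (v, v) \<in> edges G" "\<And>u v. (u, v) \<in> edges G \<Longrightarrow> (v, u) \<in> edges G"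
  using assms unfolding is_graph_def by auto

lemma finite_nbrs: "is_graph G \<Longrightarrow> finite (nbrs G a)"
  unfolding nbrs_def using is_graphD(1) by auto

lemma nbrs_sym: "is_graph G \<Longrightarrow> b \<in> nbrs G a \<Longrightarrow> a \<in> nbrs G b"
  unfolding nbrs_def using is_graphD(2,4) by blast

lemma walk_in_verts:
  "is_graph G \<Longrightarrow> walk (edges G) ys \<Longrightarrow> 2 \<le> length ys \<Longrightarrow> set ys \<subseteq> verts G"
proof (induction ys rule: induct_list012)
  case (3 x y zs)
  then show ?case by (cases zs) (auto dest: is_graphD(2))
qed auto

lemma induced_rtrancl_mono:
  "S \<subseteq> T \<Longrightarrow> (x, y) \<in> (induced_rel G S)\<^sup>* \<Longrightarrow> (x, y) \<in> (induced_rel G T)\<^sup>*"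
  by (rule rtrancl_mono[THEN subsetD]) (auto simp: induced_rel_def)

lemma induced_rtrancl_cases: "(x, y) \<in> (induced_rel G S)\<^sup>* \<Longrightarrow> x = y \<or> (x \<in> S \<and> y \<in> S)"
  by (induction rule: rtrancl_induct) (auto simp: induced_rel_def)

lemma induced_rtrancl_sym:
  assumes "is_graph G" "(x, y) \<in> (induced_rel G S)\<^sup>*"
  shows "(y, x) \<in> (induced_rel G S)\<^sup>*"
  using assms(2)
proof (induction rule: rtrancl_induct)
  case (step y z)
  then have "(z, y) \<in> induced_rel G S"
    using assms(1) by (auto simp: induced_rel_def dest: is_graphD(4))
  then show ?case using step by (meson converse_rtrancl_into_rtrancl)
qed auto

lemma induced_rtrancl_edge:
  "(x, y) \<in> edges G \<Longrightarrow> x \<in> S \<Longrightarrow> y \<in> S \<Longrightarrow> (x, y) \<in> (induced_rel G S)\<^sup>*"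
  by (auto simp: induced_rel_def)

lemma induced_rtrancl_map:
  assumes "(x, x') \<in> (induced_rel G S)\<^sup>*"
    and "\<And>u v. (u, v) \<in> induced_rel G S \<Longrightarrow> (\<phi> u, \<phi> v) \<in> induced_rel H T"
  shows "(\<phi> x, \<phi> x') \<in> (induced_rel H T)\<^sup>*"
  using assms(1)
proof (induction rule: rtrancl_induct)
  case (step y z)
  then show ?case using assms(2) by (meson rtrancl_into_rtrancl)
qed simp

lemma induced_rtrancl_closed:
  assumes "(w, w') \<in> (induced_rel G T)\<^sup>*" "w \<in> S"
    and "\<And>q r. (q, r) \<in> edges G \<Longrightarrow> q \<in> S \<Longrightarrow> r \<in> T \<Longrightarrow> r \<in> S"
  shows "w' \<in> S"
  using assms(1,2)
proof (induction rule: rtrancl_induct)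
  case (step y z)
  then show ?case using assms(3) by (auto simp: induced_rel_def)
qed simp

lemma induced_rtrancl_exit:
  assumes "(x, y) \<in> (induced_rel G S)\<^sup>*" "x \<in> Q" "y \<notin> Q"
  shows "\<exists>s t. (x, s) \<in> (induced_rel G (S \<inter> Q))\<^sup>* \<and> s \<in> Q \<and> t \<notin> Q \<and> (s, t) \<in> induced_rel G S"
  using assms
proof (induction rule: converse_rtrancl_induct)
  case (step x x')
  show ?case
  proof (cases "x' \<in> Q")
    case True
    with step obtain s t where st: "(x', s) \<in> (induced_rel G (S \<inter> Q))\<^sup>*" "s \<in> Q" "t \<notin> Q"
        "(s, t) \<in> induced_rel G S"
      by blast
    have "(x, x') \<in> induced_rel G (S \<inter> Q)"
      using step(1) True step(4) by (auto simp: induced_rel_def)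
    with st show ?thesis by (meson converse_rtrancl_into_rtrancl)
  qed (use step in blast)
qed simp

lemma walk_induced_rtrancl:
  "walk (edges G) ys \<Longrightarrow> set ys \<subseteq> S \<Longrightarrow> ys \<noteq> [] \<Longrightarrow> (hd ys, last ys) \<in> (induced_rel G S)\<^sup>*"
  by (rule walk_rtrancl) (auto simp: induced_rel_def elim: successively_mono)

lemma induced_rtrancl_distinct_walk:
  assumes "(x, y) \<in> (induced_rel G S)\<^sup>*"
  obtains ys where "ys \<noteq> []" "hd ys = x" "last ys = y" "distinct ys" "walk (edges G) ys"
    "x = y \<or> set ys \<subseteq> S"
proof -
  obtain ys where ys: "ys \<noteq> []" "hd ys = x" "last ys = y" "distinct ys" "walk (induced_rel G S) ys"
    using rtrancl_distinct_walk[OF assms] by blast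
  have "walk (edges G) ys" using ys(5) by (auto simp: induced_rel_def elim: successively_mono)
  moreover have "set ys \<subseteq> S" if "length ys \<noteq> 1"
  proof -
    have "length ys \<ge> 2" using ys(1) that by (cases ys) (auto simp: Suc_le_eq)
    have "ys ! i \<in> S" if "i < length ys" for i
    proof (cases "Suc i < length ys")
      case True
      then show ?thesis using successively_nth[OF ys(5) True] by (auto simp: induced_rel_def)
    next
      case False
      then have "Suc (i - 1) < length ys" "Suc (i - 1) = i"
        using that \<open>length ys \<ge> 2\<close> by auto
      then show ?thesis using successively_nth[OF ys(5), of "i - 1"] by (auto simp: induced_rel_def)
    qed
    then show ?thesis by (auto simp: in_set_conv_nth)
  qed
  moreover have "x = y" if "length ys = 1" using ys that by (cases ys) auto
  ultimately show ?thesis using ys that by blast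
qed

definition component :: "graph \<Rightarrow> nat set \<Rightarrow> nat \<Rightarrow> nat set" where
  "component G S x = {y \<in> S. (x, y) \<in> (induced_rel G S)\<^sup>*}"

lemma components_eq_component_image: "components G S = component G S ` S"
  unfolding components_def component_def by auto

lemma component_self: "x \<in> S \<Longrightarrow> x \<in> component G S x"
  by (simp add: component_def)

lemma component_subset: "component G S x \<subseteq> S"
  by (auto simp: component_def)

lemma component_eq:
  assumes "is_graph G" "y \<in> component G S x"
  shows "component G S y = component G S x"
proof -
  have xy: "(x, y) \<in> (induced_rel G S)\<^sup>*" using assms by (simp add: component_def)
  then have yx: "(y, x) \<in> (induced_rel G S)\<^sup>*" using induced_rtrancl_sym assms(1) by blast
  show ?thesis unfolding component_def using xy yx by (auto intro: rtrancl_trans)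
qed

lemma component_closed:
  "y \<in> component G S x \<Longrightarrow> (y, z) \<in> edges G \<Longrightarrow> z \<in> S \<Longrightarrow> z \<in> component G S x"
  unfolding component_def induced_rel_def by (auto intro: rtrancl_into_rtrancl)

lemma component_rtrancl_inside:
  assumes "(x, y) \<in> (induced_rel G S)\<^sup>*" "x \<in> S"
  shows "(x, y) \<in> (induced_rel G (component G S x))\<^sup>*"
  using assms(1)
proof (induction rule: rtrancl_induct)
  case (step y z)
  have "y \<in> component G S x"
    using step(1) assms(2) induced_rtrancl_cases[OF step(1)] unfolding component_def by auto
  moreover have "z \<in> component G S x"
    using step(1,2) unfolding component_def induced_rel_def by (auto intro: rtrancl_into_rtrancl)
  ultimately have "(y, z) \<in> induced_rel G (component G S x)"
    using step(2) by (auto simp: induced_rel_def)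
  with step(3) show ?case by (rule rtrancl_into_rtrancl)
qed simp

lemma connected_component:
  assumes G: "is_graph G" and S: "S \<subseteq> verts G" "x \<in> S"
  shows "connected_in G (component G S x)"
  unfolding connected_in_def
proof (intro conjI ballI)
  show "component G S x \<noteq> {}" using component_self[OF S(2), where G=G] by auto
  show "component G S x \<subseteq> verts G" using component_subset[of G S x] S by auto
next
  fix y z assume yz: "y \<in> component G S x" "z \<in> component G S x"
  have "(x, y) \<in> (induced_rel G (component G S x))\<^sup>*" "(x, z) \<in> (induced_rel G (component G S x))\<^sup>*"
    using component_rtrancl_inside[OF _ S(2)] yz by (auto simp: component_def)
  then show "(y, z) \<in> (induced_rel G (component G S x))\<^sup>*"
    using induced_rtrancl_sym[OF G] by (blast intro: rtrancl_trans)
qed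

lemma connected_inI_center:
  assumes G: "is_graph G" and S: "S \<subseteq> verts G" "s \<in> S"
    and reach: "\<And>x. x \<in> S \<Longrightarrow> (x, s) \<in> (induced_rel G S)\<^sup>*"
  shows "connected_in G S"
  unfolding connected_in_def
  using S reach induced_rtrancl_sym[OF G] by (blast intro: rtrancl_trans)

lemma finite_components: "finite S \<Longrightarrow> finite (components G S)"
  by (simp add: components_eq_component_image)

lemma components_subset: "K \<in> components G S \<Longrightarrow> K \<subseteq> S"
  unfolding components_eq_component_image using component_subset by blast

lemma components_eqI:
  assumes "is_graph G" "K1 \<in> components G S" "K2 \<in> components G S" "z \<in> K1" "z \<in> K2"
  shows "K1 = K2"
proof -
  obtain x1 x2 where "K1 = component G S x1" "K2 = component G S x2"
    using assms(2,3) unfolding components_eq_component_image by auto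
  then show ?thesis using component_eq[OF assms(1)] assms(4,5) by metis
qed

lemma components_closed:
  assumes "K \<in> components G S" "v \<in> K" "(v, v') \<in> edges G" "v' \<in> S"
  shows "v' \<in> K"
  using assms component_closed unfolding components_eq_component_image by blast

lemma components_rtrancl_closed:
  assumes "K \<in> components G S" "v \<in> K" "(v, v') \<in> (induced_rel G S)\<^sup>*"
  shows "v' \<in> K"
  using assms(3,2)
proof (induction rule: rtrancl_induct)
  case (step y z)
  then show ?case using components_closed[OF assms(1)] by (auto simp: induced_rel_def)
qed simp

section \<open>Trees\<close>

lemma tree_no_cycle: "is_tree T \<Longrightarrow> \<not> has_cycle T"
  and tree_is_graph: "is_tree T \<Longrightarrow> is_graph T"
  unfolding is_tree_def by auto

definition bridge :: "graph \<Rightarrow> nat \<Rightarrow> nat \<Rightarrow> bool" where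
  "bridge G u v \<longleftrightarrow>
     (\<exists>S. u \<in> S \<and> v \<notin> S \<and> (\<forall>s t. (s, t) \<in> edges G \<and> s \<in> S \<and> t \<notin> S \<longrightarrow> s = u \<and> t = v))"

lemma tree_edge_bridge:
  assumes T: "is_tree T" and e: "(u, v) \<in> edges T" "u \<noteq> v"
  shows "bridge T u v"
proof -
  have G: "is_graph T" using T tree_is_graph by auto
  define R where "R = edges T - {(u, v), (v, u)}"
  define S where "S = {z. (u, z) \<in> R\<^sup>*}"
  have vS: "v \<notin> S"
  proof
    assume "v \<in> S"
    then have "(u, v) \<in> R\<^sup>*" by (simp add: S_def)
    then obtain ys where ys: "ys \<noteq> []" "hd ys = u" "last ys = v" "distinct ys" "walk R ys"
      by (rule rtrancl_distinct_walk)
    obtain y2 ys' where ys': "ys = u # y2 # ys'" using ys e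
      by (cases ys rule: remdups_adj.cases) auto
    have "ys' \<noteq> []" using ys ys' by (auto simp: R_def)
    then have len: "3 \<le> length ys" using ys' by (cases ys') auto
    have walk: "walk (edges T) ys" using ys(5) by (auto simp: R_def elim: successively_mono)
    have "(last ys, hd ys) \<in> edges T" using ys e G by (auto dest: is_graphD(4))
    moreover have "set ys \<subseteq> verts T" using walk_in_verts[OF G walk] len by auto
    ultimately have "has_cycle T" using has_cycle_closed_walk[OF ys(4) len walk] by auto
    then show False using T tree_no_cycle by auto
  qed
  have "t \<in> S" if "(s, t) \<in> R" "s \<in> S" for s t
    using that by (auto simp: S_def intro: rtrancl_into_rtrancl)
  then have "\<forall>s t. (s, t) \<in> edges T \<and> s \<in> S \<and> t \<notin> S \<longrightarrow> s = u \<and> t = v"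
    using vS by (auto simp: R_def)
  moreover have "u \<in> S" by (simp add: S_def)
  ultimately show ?thesis using vS unfolding bridge_def by blast
qed

text \<open>On a cycle, let \<open>S\<close> witness that its first edge is a bridge; the cycle must return to
  \<open>S\<close> through a second edge leaving \<open>S\<close>.\<close>

lemma no_cycle_if_bridges:
  assumes G: "is_graph G" and bridges: "\<And>u v. (u, v) \<in> edges G \<Longrightarrow> u \<noteq> v \<Longrightarrow> bridge G u v"
  shows "\<not> has_cycle G"
proof
  assume "has_cycle G"
  then obtain vs where vs: "length vs \<ge> 3" "distinct vs" "set vs \<subseteq> verts G"
    "\<forall>i < length vs. (vs ! i, vs ! ((i + 1) mod length vs)) \<in> edges G"
    unfolding has_cycle_def by blast
  let ?L = "length vs"
  have "vs \<noteq> []" using vs(1) by auto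
  then have e01: "(vs ! 0, vs ! 1) \<in> edges G" using vs(4)[rule_format, of 0] vs(1) by simp
  have "0 < length vs" "1 < length vs" using vs(1) by auto
  then have ne: "vs ! 0 \<noteq> vs ! 1" using vs(2) unfolding distinct_conv_nth by (metis zero_neq_one)
  obtain S where S: "vs ! 0 \<in> S" "vs ! 1 \<notin> S"
    "\<forall>s t. (s, t) \<in> edges G \<and> s \<in> S \<and> t \<notin> S \<longrightarrow> s = vs ! 0 \<and> t = vs ! 1"
    using bridges[OF e01 ne] unfolding bridge_def by blast
  define J where "J = {j. 1 \<le> j \<and> j < ?L \<and> vs ! j \<notin> S}"
  have "1 \<in> J" using S vs(1) by (simp add: J_def)
  have finJ: "finite J" by (auto simp: J_def)
  define j where "j = Max J"
  have jJ: "j \<in> J" using Max_in[OF finJ] \<open>1 \<in> J\<close> j_def by auto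
  have nxt: "vs ! ((j + 1) mod ?L) \<in> S"
  proof (cases "j + 1 < ?L")
    case True
    then have "j + 1 \<notin> J" using Max_ge[OF finJ] j_def by force
    then show ?thesis using True jJ by (simp add: J_def)
  next
    case False
    then have "j + 1 = ?L" using jJ by (simp add: J_def)
    then show ?thesis using S by simp
  qed
  have "(vs ! j, vs ! ((j + 1) mod ?L)) \<in> edges G" using vs(4) jJ by (simp add: J_def)
  then have "(vs ! ((j + 1) mod ?L), vs ! j) \<in> edges G" using G by (auto dest: is_graphD(4))
  then have eq: "vs ! ((j + 1) mod ?L) = vs ! 0" "vs ! j = vs ! 1"
    using S(3) nxt jJ by (auto simp: J_def)
  have "j = 1" using eq(2) vs(1,2) jJ by (simp add: J_def nth_eq_iff_index_eq)
  moreover have "(j + 1) mod ?L = 0"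
  proof -
    have "(j + 1) mod ?L < ?L" using vs(1) by (intro mod_less_divisor) auto
    then show ?thesis using eq(1) vs(2) \<open>0 < length vs\<close> unfolding distinct_conv_nth by metis
  qed
  ultimately show False using vs(1) by simp
qed

lemma bridge_pullback:
  assumes hom: "\<And>s t. (s, t) \<in> edges D \<Longrightarrow> (h s, h t) \<in> edges X"
    and uniq: "\<And>s t. (s, t) \<in> edges D \<Longrightarrow> h s = h u \<Longrightarrow> h t = h v \<Longrightarrow> s = u \<and> t = v"
    and "bridge X (h u) (h v)"
  shows "bridge D u v"
proof -
  obtain S where S: "h u \<in> S" "h v \<notin> S"
    "\<forall>s t. (s, t) \<in> edges X \<and> s \<in> S \<and> t \<notin> S \<longrightarrow> s = h u \<and> t = h v"
    using assms(3) unfolding bridge_def by blast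
  show ?thesis
    unfolding bridge_def using S hom uniq by (intro exI[of _ "{z. h z \<in> S}"]) blast
qed

lemma tree_nbrs_separated:
  assumes T: "is_tree T" and w: "w \<in> verts T" and u: "u \<in> nbrs T w" "u' \<in> nbrs T w" "u \<noteq> u'"
  shows "(u, u') \<notin> (induced_rel T (verts T - {w}))\<^sup>*"
proof
  assume "(u, u') \<in> (induced_rel T (verts T - {w}))\<^sup>*"
  then obtain ys where ys: "ys \<noteq> []" "hd ys = u" "last ys = u'" "distinct ys" "walk (edges T) ys"
     "u = u' \<or> set ys \<subseteq> verts T - {w}"
    by (rule induced_rtrancl_distinct_walk)
  then have ys6: "set ys \<subseteq> verts T - {w}" using u(3) by auto
  have G: "is_graph T" using T tree_is_graph by auto
  have "2 \<le> length ys"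
    using ys(1-3) u(3) by (cases ys rule: remdups_adj.cases) auto
  let ?zs = "ys @ [w]"
  have "distinct ?zs" using ys ys6 by auto
  moreover have "3 \<le> length ?zs" using \<open>2 \<le> length ys\<close> by simp
  moreover have "walk (edges T) ?zs"
    using ys u G by (auto simp: successively_append_iff nbrs_def dest: is_graphD(4))
  moreover have "(last ?zs, hd ?zs) \<in> edges T" using ys u by (auto simp: nbrs_def)
  moreover have "set ?zs \<subseteq> verts T" using ys6 w by auto
  ultimately have "has_cycle T" by (rule has_cycle_closed_walk)
  then show False using T tree_no_cycle by auto
qed

lemma connected_distinct_walk:
  assumes "connected_in G F" "x \<in> F" "y \<in> F"
  obtains ys where "ys \<noteq> []" "hd ys = x" "last ys = y" "distinct ys" "walk (edges G) ys"
    "set ys \<subseteq> F"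
proof -
  have "(x, y) \<in> (induced_rel G F)\<^sup>*" using assms unfolding connected_in_def by auto
  then obtain ys where ys: "ys \<noteq> []" "hd ys = x" "last ys = y" "distinct ys" "walk (edges G) ys"
     "x = y \<or> set ys \<subseteq> F" by (rule induced_rtrancl_distinct_walk)
  have "set ys \<subseteq> F"
  proof (cases "x = y")
    case True
    then have "ys = [x]" using ys distinct_hd_eq_last[of ys] by simp
    then show ?thesis using assms by simp
  qed (use ys in blast)
  with ys that show ?thesis by blast
qed

lemma tree_unique_edge_between:
  assumes T: "is_tree T" and F: "connected_in T F" "connected_in T F'" "F \<inter> F' = {}"
    and e: "(p, q) \<in> edges T" "(p', q') \<in> edges T" "p \<in> F" "p' \<in> F" "q \<in> F'" "q' \<in> F'"
  shows "p = p' \<and> q = q'"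
proof (rule ccontr)
  assume ne: "\<not> (p = p' \<and> q = q')"
  have G: "is_graph T" using T tree_is_graph by auto
  obtain xs where xs: "xs \<noteq> []" "hd xs = p'" "last xs = p" "distinct xs" "walk (edges T) xs"
     "set xs \<subseteq> F" using connected_distinct_walk[OF F(1) e(4,3)] .
  obtain ys where ys: "ys \<noteq> []" "hd ys = q" "last ys = q'" "distinct ys" "walk (edges T) ys"
     "set ys \<subseteq> F'" using connected_distinct_walk[OF F(2) e(5,6)] .
  let ?zs = "xs @ ys"
  have "distinct ?zs" using xs ys F(3) by auto
  moreover have "3 \<le> length ?zs"
  proof -
    have "length xs \<noteq> 1 \<or> length ys \<noteq> 1"
      using ne xs(1-3) ys(1-3) by (auto simp: length_Suc_conv)
    then show ?thesis using xs(1) ys(1) by (cases xs; cases ys) (auto simp: Suc_le_eq)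
  qed
  moreover have "walk (edges T) ?zs"
    using xs(1,3,5) ys(1,2,5) e(1) by (simp add: successively_append_iff)
  moreover have "(last ?zs, hd ?zs) \<in> edges T"
    using xs(1,2) ys(1,3) e(2) G by (simp add: is_graphD(4))
  moreover have "set ?zs \<subseteq> verts T" using xs ys F unfolding connected_in_def by auto
  ultimately have "has_cycle T" by (rule has_cycle_closed_walk)
  then show False using T tree_no_cycle by auto
qed

lemma tree_nbrs_bij_components:
  assumes T: "is_tree T" and v: "v \<in> verts T"
  shows "bij_betw (component T (verts T - {v})) (nbrs T v) (components T (verts T - {v}))"
proof -
  have G: "is_graph T" using T tree_is_graph by auto
  let ?S = "verts T - {v}"
  have inj: "inj_on (component T ?S) (nbrs T v)"
  proof (rule inj_onI)
    fix u u' assume u: "u \<in> nbrs T v" "u' \<in> nbrs T v" "component T ?S u = component T ?S u'"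
    have "u' \<in> ?S" using u(2) by (auto simp: nbrs_def)
    then have "u' \<in> component T ?S u" using component_self u(3) by metis
    then have "(u, u') \<in> (induced_rel T ?S)\<^sup>*" by (simp add: component_def)
    then show "u = u'" using tree_nbrs_separated[OF T v u(1,2)] by blast
  qed
  have "components T ?S \<subseteq> component T ?S ` nbrs T v"
  proof
    fix K assume "K \<in> components T ?S"
    then obtain z where z: "z \<in> ?S" "K = component T ?S z"
      unfolding components_eq_component_image by auto
    have "(z, v) \<in> (induced_rel T (verts T))\<^sup>*"
      using T z v unfolding is_tree_def connected_in_def by auto
    from induced_rtrancl_exit[OF this, of ?S] z
    obtain s t where st: "(z, s) \<in> (induced_rel T (verts T \<inter> ?S))\<^sup>*" "s \<in> ?S" "t \<notin> ?S"
      "(s, t) \<in> induced_rel T (verts T)" by auto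
    have sn: "s \<in> nbrs T v"
      using st G by (auto simp: nbrs_def induced_rel_def dest: is_graphD(4))
    have "verts T \<inter> ?S = ?S" by auto
    then have "s \<in> component T ?S z" using st by (simp add: component_def)
    then have "component T ?S s = K" using component_eq[OF G] z by metis
    then show "K \<in> component T ?S ` nbrs T v" using sn by blast
  qed
  moreover have "component T ?S ` nbrs T v \<subseteq> components T ?S"
    unfolding components_eq_component_image by (auto simp: nbrs_def)
  ultimately show ?thesis using inj by (simp add: bij_betw_def)
qed

lemma tree_card_components:
  assumes "is_tree T" "v \<in> verts T"
  shows "card (components T (verts T - {v})) = ord T v"
  using bij_betw_same_card[OF tree_nbrs_bij_components[OF assms]] by (simp add: ord_eq_card_nbrs)

lemma tree_nbrs_nonempty:
  assumes T: "is_tree T" and v: "v \<in> verts T" and z: "z \<in> verts T" "z \<noteq> v"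
  shows "nbrs T v \<noteq> {}"
proof -
  have "(v, z) \<in> (induced_rel T (verts T))\<^sup>*"
    using T v z unfolding is_tree_def connected_in_def by auto
  from induced_rtrancl_exit[OF this, of "{v}"] z
  obtain s t where "s \<in> {v}" "t \<notin> {v}" "(s, t) \<in> induced_rel T (verts T)" by auto
  then show ?thesis by (auto simp: nbrs_def induced_rel_def)
qed

lemma connected_remove_end_vertex:
  assumes G: "is_graph G" and conn: "connected_in G (verts G)" and l: "nbrs G l = {p}"
    and ne: "verts G - {l} \<noteq> {}"
  shows "connected_in G (verts G - {l})"
  unfolding connected_in_def
proof (intro conjI ballI)
  fix a b assume ab: "a \<in> verts G - {l}" "b \<in> verts G - {l}"
  obtain zs where zs: "zs \<noteq> []" "hd zs = a" "last zs = b" "distinct zs" "walk (edges G) zs"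
    "set zs \<subseteq> verts G" using connected_distinct_walk[OF conn] ab by blast
  have "l \<notin> set zs"
  proof
    assume "l \<in> set zs"
    then obtain i where i: "i < length zs" "zs ! i = l" by (auto simp: in_set_conv_nth)
    have "zs ! 0 \<noteq> l" "zs ! (length zs - 1) \<noteq> l"
      using ab zs(1-3) by (auto simp: hd_conv_nth last_conv_nth)
    then have "i \<noteq> 0" "i \<noteq> length zs - 1" using i by metis+
    then have i1: "Suc (i - 1) = i" "Suc i < length zs" using i by auto
    have "(l, zs ! (i - 1)) \<in> edges G" "(l, zs ! Suc i) \<in> edges G"
      using successively_nth[OF zs(5), of "i - 1"] successively_nth[OF zs(5), of i] i1 i(2) G
      by (auto dest: is_graphD(4))
    moreover have "zs ! (i - 1) \<noteq> zs ! i" "zs ! Suc i \<noteq> zs ! i" "zs ! (i - 1) \<noteq> zs ! Suc i"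
      using zs(4) i(1) i1 by (simp_all add: nth_eq_iff_index_eq)
    moreover have "zs ! (i - 1) \<in> verts G" "zs ! Suc i \<in> verts G"
      using zs(6) i(1) i1 nth_mem by (metis less_imp_diff_less subsetD)+
    ultimately have "zs ! (i - 1) \<in> nbrs G l" "zs ! Suc i \<in> nbrs G l"
      unfolding nbrs_def i(2) by blast+
    then show False using l \<open>zs ! (i - 1) \<noteq> zs ! Suc i\<close> by auto
  qed
  then have "set zs \<subseteq> verts G - {l}" using zs(6) by auto
  then show "(a, b) \<in> (induced_rel G (verts G - {l}))\<^sup>*"
    using walk_induced_rtrancl[OF zs(5) _ zs(1)] zs(2,3) by auto
qed (use ne in auto)

text \<open>A second neighbour of the end of the path on the path would close a cycle.\<close>

lemma tree_end_of_maximal_walk: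
  assumes T: "is_tree T" and ys: "distinct ys" "walk (edges T) ys" "2 \<le> length ys"
    and maximal: "nbrs T (last ys) \<subseteq> set ys"
  shows "nbrs T (last ys) = {ys ! (length ys - 2)}"
proof -
  have G: "is_graph T" using T tree_is_graph by auto
  let ?L = "length ys" and ?l = "last ys"
  have "ys \<noteq> []" using ys(3) by auto
  then have lnth: "?l = ys ! (?L - 1)" by (simp add: last_conv_nth)
  have "Suc (?L - 2) = ?L - 1" "Suc (?L - 2) < ?L" using ys(3) by auto
  then have edge: "(ys ! (?L - 2), ?l) \<in> edges T"
    using successively_nth[OF ys(2), of "?L - 2"] lnth by simp
  have ne: "ys ! (?L - 2) \<noteq> ?l" using ys(1,3) lnth by (simp add: nth_eq_iff_index_eq)
  have "ys ! (?L - 2) \<in> nbrs T ?l"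
    using edge ne G by (auto simp: nbrs_def dest: is_graphD)
  moreover have "w = ys ! (?L - 2)" if w: "w \<in> nbrs T ?l" for w
  proof -
    obtain k where k: "k < ?L" "ys ! k = w" using w maximal in_set_conv_nth[of w ys] by blast
    have "k \<noteq> ?L - 1" using w lnth k by (auto simp: nbrs_def)
    moreover have "\<not> k < ?L - 2"
    proof
      assume kl: "k < ?L - 2"
      let ?zs = "drop k ys"
      have "last ?zs = ?l" "hd ?zs = w" using k kl by (simp_all add: hd_drop_conv_nth)
      then have "(last ?zs, hd ?zs) \<in> edges T" using w G by (auto simp: nbrs_def dest: is_graphD(4))
      moreover have "set ?zs \<subseteq> verts T"
        using walk_in_verts[OF G ys(2,3)] set_drop_subset by fastforce
      moreover have "walk (edges T) ?zs"
        using ys(2) by (metis append_take_drop_id successively_append_iff)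
      ultimately have "has_cycle T" using ys(1) kl by (intro has_cycle_closed_walk) auto
      then show False using T tree_no_cycle by auto
    qed
    ultimately have "k = ?L - 2" using k(1) by linarith
    then show ?thesis using k(2) by simp
  qed
  ultimately show ?thesis by blast
qed

lemma tree_has_leaf:
  assumes T: "is_tree T" and v: "v \<in> verts T" and c2: "2 \<le> card (verts T)"
  shows "\<exists>l \<in> verts T. l \<noteq> v \<and> ord T l = 1 \<and> connected_in T (verts T - {l})"
proof -
  have G: "is_graph T" using T tree_is_graph by auto
  define PS where
    "PS = {ys. ys \<noteq> [] \<and> hd ys = v \<and> distinct ys \<and> walk (edges T) ys \<and> set ys \<subseteq> verts T}"
  have bounded: "length ys \<le> card (verts T)" if "ys \<in> PS" for ys
  proof -
    have "distinct ys" "set ys \<subseteq> verts T" using that by (auto simp: PS_def)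
    then show ?thesis using distinct_card card_mono[OF is_graphD(1)[OF G]] by metis
  qed
  have "verts T \<noteq> {v}" using c2 by auto
  then obtain z where "z \<in> verts T" "z \<noteq> v" using v by blast
  then obtain t where t: "t \<in> nbrs T v" using tree_nbrs_nonempty[OF T v] by blast
  have "[v, t] \<in> PS" using t v by (auto simp: PS_def nbrs_def)
  then obtain ys where ys: "ys \<in> PS" and longest: "\<And>zs. zs \<in> PS \<Longrightarrow> length zs \<le> length ys"
    using ex_has_greatest_nat[where P="\<lambda>ys. ys \<in> PS" and f=length and b="Suc (card (verts T))"]
      bounded by (metis le_imp_less_Suc)
  have ys1: "ys \<noteq> []" "hd ys = v" "distinct ys" "walk (edges T) ys" "set ys \<subseteq> verts T"
    using ys by (auto simp: PS_def)
  have len: "2 \<le> length ys" using longest[OF \<open>[v, t] \<in> PS\<close>] by simp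
  have "nbrs T (last ys) \<subseteq> set ys"
  proof
    fix w assume w: "w \<in> nbrs T (last ys)"
    show "w \<in> set ys"
    proof (rule ccontr)
      assume "w \<notin> set ys"
      then have "ys @ [w] \<in> PS" using ys1 w by (auto simp: PS_def nbrs_def successively_append_iff)
      then show False using longest by fastforce
    qed
  qed
  then have leaf: "nbrs T (last ys) = {ys ! (length ys - 2)}"
    using tree_end_of_maximal_walk[OF T ys1(3,4) len] by blast
  have "last ys \<noteq> v"
  proof
    assume "last ys = v"
    then have "ys = [v]" using distinct_hd_eq_last[OF ys1(3,1)] ys1(2) by auto
    then show False using len by simp
  qed
  moreover have "last ys \<in> verts T" using ys1(1,5) by auto
  moreover have "connected_in T (verts T - {last ys})"
    using connected_remove_end_vertex[OF G _ leaf] T v \<open>last ys \<noteq> v\<close> by (auto simp: is_tree_def)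
  ultimately show ?thesis using leaf by (auto simp: ord_eq_card_nbrs)
qed

abbreviation induced_graph :: "graph \<Rightarrow> nat set \<Rightarrow> graph" where
  "induced_graph G S \<equiv> (S, induced_rel G S)"

lemma verts_pair [simp]: "verts (V, E) = V" and edges_pair [simp]: "edges (V, E) = E"
  by (simp_all add: verts_def edges_def)

lemma induced_rel_induced_graph:
  "S' \<subseteq> S \<Longrightarrow> induced_rel (induced_graph G S) S' = induced_rel G S'"
  by (auto simp: induced_rel_def)

lemma tree_induced_subtree:
  assumes T: "is_tree T" and S: "connected_in T S"
  shows "is_tree (induced_graph T S)"
  unfolding is_tree_def
proof (intro conjI)
  have G: "is_graph T" using T tree_is_graph by blast
  have "S \<subseteq> verts T" using S unfolding connected_in_def by blast
  moreover have "finite S" using finite_subset calculation is_graphD(1)[OF G] by blast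
  ultimately show "is_graph (induced_graph T S)"
    using is_graphD(3,4)[OF G] unfolding is_graph_def
    by (auto simp: induced_rel_def verts_def edges_def)
  show "connected_in (induced_graph T S) (verts (induced_graph T S))"
    using S induced_rel_induced_graph[of S S T] unfolding connected_in_def by simp
  show "\<not> has_cycle (induced_graph T S)"
  proof
    assume "has_cycle (induced_graph T S)"
    then have "has_cycle T"
      unfolding has_cycle_def using \<open>S \<subseteq> verts T\<close>
      by (auto simp: induced_rel_def verts_def edges_def)
    then show False using T tree_no_cycle by blast
  qed
qed

section \<open>Monotone epimorphisms and points of coherence\<close>

lemma epiD:
  assumes "epi B A f"
  shows "f ` verts B = verts A" "\<And>b. b \<in> verts B \<Longrightarrow> f b \<in> verts A"
    "\<And>a1 a2. a1 \<in> verts A \<Longrightarrow> a2 \<in> verts A \<Longrightarrow> (a1, a2) \<in> edges A \<Longrightarrow>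
       \<exists>b1\<in>verts B. \<exists>b2\<in>verts B. f b1 = a1 \<and> f b2 = a2 \<and> (b1, b2) \<in> edges B"
    "\<And>b1 b2. b1 \<in> verts B \<Longrightarrow> b2 \<in> verts B \<Longrightarrow> (b1, b2) \<in> edges B \<Longrightarrow> (f b1, f b2) \<in> edges A"
  using assms unfolding epi_def by blast+

lemma epi_edge:
  assumes "epi B A f" "is_graph B" "(b1, b2) \<in> edges B"
  shows "(f b1, f b2) \<in> edges A"
  using epiD(4)[OF assms(1)] is_graphD(2)[OF assms(2) assms(3)] assms(3) by blast

text \<open>Walk along a path in \<open>S\<close>, lifting each edge and moving inside the connected fibres.\<close>

lemma monotone_epi_preimage_connected:
  assumes h: "monotone_epi D X h" and conn: "connected_in X S"
  shows "connected_in D {d \<in> verts D. h d \<in> S}"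
  unfolding connected_in_def
proof (intro conjI ballI)
  let ?Q = "{d \<in> verts D. h d \<in> S}"
  have epi: "epi D X h" and fib: "\<And>x. x \<in> verts X \<Longrightarrow> connected_in D {d \<in> verts D. h d = x}"
    using h unfolding monotone_epi_def by auto
  have SX: "S \<subseteq> verts X" using conn unfolding connected_in_def by auto
  obtain s where "s \<in> S" using conn unfolding connected_in_def by auto
  moreover obtain e where "e \<in> verts D" "h e = s"
    using epiD(1)[OF epi] SX \<open>s \<in> S\<close> by (metis imageE subsetD)
  ultimately show "?Q \<noteq> {}" by blast
  show "?Q \<subseteq> verts D" by auto
  have fibQ: "(e, e') \<in> (induced_rel D ?Q)\<^sup>*"
    if "e \<in> verts D" "e' \<in> verts D" "h e = h e'" "h e \<in> S" for e e'
  proof -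
    have "(e, e') \<in> (induced_rel D {z \<in> verts D. h z = h e})\<^sup>*"
      using fib[of "h e"] that SX unfolding connected_in_def by auto
    then show ?thesis by (rule induced_rtrancl_mono[rotated]) (use that in auto)
  qed
  fix d d' assume dd: "d \<in> ?Q" "d' \<in> ?Q"
  have "(h d, h d') \<in> (induced_rel X S)\<^sup>*" using conn dd unfolding connected_in_def by auto
  then have "\<forall>e'. e' \<in> verts D \<longrightarrow> h e' = h d' \<longrightarrow> (d, e') \<in> (induced_rel D ?Q)\<^sup>*"
  proof (induction rule: rtrancl_induct)
    case base
    then show ?case using fibQ dd by auto
  next
    case (step y z)
    show ?case
    proof (intro allI impI)
      fix e' assume e': "e' \<in> verts D" "h e' = z"
      have yz: "(y, z) \<in> edges X" "y \<in> S" "z \<in> S" using step(2) by (auto simp: induced_rel_def)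
      then obtain d1 d2 where d12: "d1 \<in> verts D" "d2 \<in> verts D" "h d1 = y" "h d2 = z"
          "(d1, d2) \<in> edges D"
        using epiD(3)[OF epi] SX by blast
      have "(d, d1) \<in> (induced_rel D ?Q)\<^sup>*" using step(3) d12 by auto
      moreover have "(d1, d2) \<in> induced_rel D ?Q" using d12 yz by (auto simp: induced_rel_def)
      moreover have "(d2, e') \<in> (induced_rel D ?Q)\<^sup>*" using fibQ d12 e' yz by auto
      ultimately show "(d, e') \<in> (induced_rel D ?Q)\<^sup>*" by (meson rtrancl_into_rtrancl rtrancl_trans)
    qed
  qed
  then show "(d, d') \<in> (induced_rel D ?Q)\<^sup>*" using dd by auto
qed

lemma monotone_epi_preimage_in_component:
  assumes h: "monotone_epi D X h" and X: "is_graph X" and d: "d \<in> verts D"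
    and K: "K \<in> components X (verts X - {h d})"
  shows "\<exists>Q. Q \<in> components D (verts D - {d}) \<and> {z \<in> verts D. h z \<in> K} \<subseteq> Q"
proof -
  obtain k where k: "k \<in> verts X - {h d}" "K = component X (verts X - {h d}) k"
    using K unfolding components_eq_component_image by blast
  moreover have "h ` verts D = verts X" using h unfolding monotone_epi_def epi_def by blast
  ultimately obtain w where w: "w \<in> verts D" "h w = k" by (metis DiffD1 imageE)
  have "k \<in> K" using component_self[of k "verts X - {h d}" X] k by simp
  have "connected_in X K" using connected_component[OF X] k by blast
  then have conn: "connected_in D {z \<in> verts D. h z \<in> K}"
    by (rule monotone_epi_preimage_connected[OF h])
  have sub: "{z \<in> verts D. h z \<in> K} \<subseteq> verts D - {d}" using components_subset[OF K] by auto
  have "{z \<in> verts D. h z \<in> K} \<subseteq> component D (verts D - {d}) w"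
  proof
    fix z assume z: "z \<in> {z \<in> verts D. h z \<in> K}"
    then have "(w, z) \<in> (induced_rel D {z \<in> verts D. h z \<in> K})\<^sup>*"
      using conn w \<open>k \<in> K\<close> unfolding connected_in_def by auto
    then have "(w, z) \<in> (induced_rel D (verts D - {d}))\<^sup>*" by (rule induced_rtrancl_mono[OF sub])
    then show "z \<in> component D (verts D - {d}) w" using z sub by (auto simp: component_def)
  qed
  moreover have "component D (verts D - {d}) w \<in> components D (verts D - {d})"
    using w \<open>k \<in> K\<close> sub unfolding components_eq_component_image by blast
  ultimately show ?thesis by blast
qed

text \<open>The bijection sends a component of \<open>X - x\<close> to the component of \<open>D - d\<close> containing its
  (connected) preimage; it is injective by separation and onto by counting.\<close>

lemma point_of_coherence_if_separating:
  assumes tree_D: "is_tree D" and TX: "is_tree X" and h: "monotone_epi D X h"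
    and x: "x \<in> verts X" "3 \<le> ord X x" and d: "d \<in> verts D" "h d = x" "ord D d = ord X x"
    and sep: "\<And>u u' w w'. u \<in> nbrs X x \<Longrightarrow> u' \<in> nbrs X x \<Longrightarrow> u \<noteq> u' \<Longrightarrow> w \<in> verts D \<Longrightarrow>
        w' \<in> verts D \<Longrightarrow> h w = u \<Longrightarrow> h w' = u' \<Longrightarrow> (w, w') \<notin> (induced_rel D (verts D - {d}))\<^sup>*"
  shows "point_of_coherence D X h x"
proof -
  have GD: "is_graph D" and GX: "is_graph X" using tree_D TX tree_is_graph by auto
  let ?SX = "verts X - {x}" and ?SD = "verts D - {d}"
  have surj: "h ` verts D = verts X" using h unfolding monotone_epi_def epi_def by auto
  define p where "p K = (SOME Q. Q \<in> components D ?SD \<and> {z \<in> verts D. h z \<in> K} \<subseteq> Q)" for K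
  have pre: "p K \<in> components D ?SD \<and> {z \<in> verts D. h z \<in> K} \<subseteq> p K"
    if K: "K \<in> components X ?SX" for K
  proof -
    have "\<exists>Q. Q \<in> components D ?SD \<and> {z \<in> verts D. h z \<in> K} \<subseteq> Q"
      using monotone_epi_preimage_in_component[OF h GX d(1)] K d(2) by blast
    then show ?thesis unfolding p_def by (rule someI_ex)
  qed
  have inj: "inj_on p (components X ?SX)"
  proof (rule inj_onI)
    fix K1 K2 assume K: "K1 \<in> components X ?SX" "K2 \<in> components X ?SX" "p K1 = p K2"
    obtain u1 where u1: "u1 \<in> nbrs X x" "K1 = component X ?SX u1"
      using tree_nbrs_bij_components[OF TX x(1)] K(1) unfolding bij_betw_def by auto
    obtain u2 where u2: "u2 \<in> nbrs X x" "K2 = component X ?SX u2"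
      using tree_nbrs_bij_components[OF TX x(1)] K(2) unfolding bij_betw_def by auto
    have "u1 \<in> verts X" "u2 \<in> verts X" using u1 u2 by (auto simp: nbrs_def)
    then obtain w1 w2 where w: "w1 \<in> verts D" "h w1 = u1" "w2 \<in> verts D" "h w2 = u2"
      using surj by (metis imageE)
    have "u1 \<in> K1" "u2 \<in> K2" using u1 u2 component_self by (auto simp: nbrs_def)
    then have "w1 \<in> p K1" "w2 \<in> p K1" using pre K w by auto
    moreover obtain w0 where "p K1 = component D ?SD w0"
      using pre[OF K(1)] unfolding components_eq_component_image by auto
    ultimately have "(w0, w1) \<in> (induced_rel D ?SD)\<^sup>*" "(w0, w2) \<in> (induced_rel D ?SD)\<^sup>*"
      by (auto simp: component_def)
    then have w12: "(w1, w2) \<in> (induced_rel D ?SD)\<^sup>*"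
      using induced_rtrancl_sym[OF GD] by (blast intro: rtrancl_trans)
    show "K1 = K2"
    proof (rule ccontr)
      assume "K1 \<noteq> K2"
      then have "u1 \<noteq> u2" using u1 u2 by auto
      then show False using sep[OF u1(1) u2(1) _ w(1,3)] w w12 by auto
    qed
  qed
  have "finite (components D ?SD)" by (simp add: finite_components is_graphD(1)[OF GD])
  moreover have "card (p ` components X ?SX) = card (components D ?SD)"
    using card_image[OF inj] tree_card_components[OF TX x(1)] tree_card_components[OF tree_D d(1)]
        d(3)
    by simp
  ultimately have "p ` components X ?SX = components D ?SD"
    using pre by (intro card_subset_eq) auto
  then have "bij_betw p (components X ?SX) (components D ?SD)" using inj by (simp add: bij_betw_def)
  then show ?thesis unfolding point_of_coherence_def using x d pre by auto
qed

lemma coherence_component_iff: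
  assumes GX: "is_graph X" and h: "epi X A h" and a: "a \<in> verts A"
    and p: "bij_betw p (components A (verts A - {a})) (components X (verts X - {c}))"
    and incl: "\<forall>Ai\<in>components A (verts A - {a}). {x \<in> verts X. h x \<in> Ai} \<subseteq> p Ai"
    and Ai: "Ai \<in> components A (verts A - {a})" and z: "z \<in> verts X" "h z \<noteq> a"
  shows "z \<in> p Ai \<longleftrightarrow> h z \<in> Ai"
proof
  assume zp: "z \<in> p Ai"
  have hz: "h z \<in> verts A - {a}" using epiD(2)[OF h z(1)] z(2) by auto
  define Ak where "Ak = component A (verts A - {a}) (h z)"
  have Ak: "Ak \<in> components A (verts A - {a})"
    using hz unfolding components_eq_component_image Ak_def by auto
  have "h z \<in> Ak" using component_self[OF hz] Ak_def by auto
  then have "z \<in> p Ak" using incl Ak z by auto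
  moreover have "p Ak \<in> components X (verts X - {c})" "p Ai \<in> components X (verts X - {c})"
    using p Ak Ai unfolding bij_betw_def by auto
  ultimately have "p Ak = p Ai" using components_eqI[OF GX] zp by blast
  then have "Ak = Ai" using p Ak Ai unfolding bij_betw_def inj_on_def by auto
  then show "h z \<in> Ai" using \<open>h z \<in> Ak\<close> by simp
next
  assume "h z \<in> Ai"
  then show "z \<in> p Ai" using incl Ai z by auto
qed

lemma epiI:
  assumes X: "is_graph X" and hV: "\<And>d. d \<in> verts D \<Longrightarrow> h d \<in> verts X"
    and hE: "\<And>d d'. (d, d') \<in> edges D \<Longrightarrow> (h d, h d') \<in> edges X"
    and lift: "\<And>x x'. (x, x') \<in> edges X \<Longrightarrow>
      \<exists>d\<in>verts D. \<exists>d'\<in>verts D. h d = x \<and> h d' = x' \<and> (d, d') \<in> edges D"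
  shows "epi D X h"
  unfolding epi_def
proof (intro conjI ballI)
  have "x \<in> h ` verts D" if "x \<in> verts X" for x
    using lift[OF is_graphD(3)[OF X that]] by blast
  then show "h ` verts D = verts X" using hV by blast
  show "(x, x') \<in> edges X \<longleftrightarrow> (\<exists>d\<in>verts D. \<exists>d'\<in>verts D. h d = x \<and> h d' = x' \<and> (d, d') \<in> edges D)"
    for x x' using lift hE by blast
qed

lemma GP_is_tree: "T \<in> GP P \<Longrightarrow> is_tree T"
  unfolding GP_def by auto

lemma GP_mor_id:
  assumes "A \<in> GP P"
  shows "GP_mor P A A id"
proof -
  have mono: "monotone_epi A A id" unfolding monotone_epi_def
  proof (intro conjI ballI)
    show "epi A A id" unfolding epi_def by auto
    fix a assume "a \<in> verts A"
    then have "{b \<in> verts A. id b = a} = {a}" by auto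
    then show "connected_in A {b \<in> verts A. id b = a}" unfolding connected_in_def by auto
  qed
  have "coherent A A id"
    unfolding coherent_def point_of_coherence_def by (fastforce intro: bij_betw_id)
  then show ?thesis unfolding GP_mor_def using assms mono by auto
qed

lemma epi_comp:
  assumes f: "epi B A f" and g: "epi D B g"
  shows "epi D A (f \<circ> g)"
  unfolding epi_def
proof (intro conjI ballI)
  show "(f \<circ> g) ` verts D = verts A" using epiD(1)[OF f] epiD(1)[OF g] by (metis image_comp)
next
  fix a1 a2 assume a: "a1 \<in> verts A" "a2 \<in> verts A"
  show "(a1, a2) \<in> edges A \<longleftrightarrow>
    (\<exists>d1\<in>verts D. \<exists>d2\<in>verts D. (f \<circ> g) d1 = a1 \<and> (f \<circ> g) d2 = a2 \<and> (d1, d2) \<in> edges D)"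
  proof
    assume "(a1, a2) \<in> edges A"
    then obtain b1 b2 where b: "b1 \<in> verts B" "b2 \<in> verts B" "f b1 = a1" "f b2 = a2"
        "(b1, b2) \<in> edges B"
      using epiD(3)[OF f a] by blast
    then obtain d1 d2 where "d1 \<in> verts D" "d2 \<in> verts D" "g d1 = b1" "g d2 = b2"
        "(d1, d2) \<in> edges D"
      using epiD(3)[OF g b(1,2)] by blast
    then show "\<exists>d1\<in>verts D. \<exists>d2\<in>verts D. (f \<circ> g) d1 = a1 \<and> (f \<circ> g) d2 = a2 \<and> (d1, d2) \<in> edges D"
      using b by auto
  next
    assume "\<exists>d1\<in>verts D. \<exists>d2\<in>verts D. (f \<circ> g) d1 = a1 \<and> (f \<circ> g) d2 = a2 \<and> (d1, d2) \<in> edges D"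
    then obtain d1 d2 where d: "d1 \<in> verts D" "d2 \<in> verts D" "f (g d1) = a1" "f (g d2) = a2"
        "(d1, d2) \<in> edges D"
      by auto
    have "(g d1, g d2) \<in> edges B" using epiD(4)[OF g d(1,2,5)] .
    then show "(a1, a2) \<in> edges A" using epiD(4)[OF f] epiD(2)[OF g] d by blast
  qed
qed

lemma monotone_epi_comp:
  assumes f: "monotone_epi B A f" and g: "monotone_epi D B g"
  shows "monotone_epi D A (f \<circ> g)"
  unfolding monotone_epi_def
proof (intro conjI ballI)
  have fe: "epi B A f" and ge: "epi D B g" using f g unfolding monotone_epi_def by auto
  then show "epi D A (f \<circ> g)" by (rule epi_comp)
  fix a assume a: "a \<in> verts A"
  have "connected_in D {d \<in> verts D. g d \<in> {b \<in> verts B. f b = a}}"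
    by (rule monotone_epi_preimage_connected[OF g]) (use f a in \<open>auto simp: monotone_epi_def\<close>)
  moreover have "{d \<in> verts D. g d \<in> {b \<in> verts B. f b = a}} = {d \<in> verts D. (f \<circ> g) d = a}"
    using epiD(2)[OF ge] by auto
  ultimately show "connected_in D {d \<in> verts D. (f \<circ> g) d = a}" by simp
qed

lemma coherent_comp:
  assumes f: "coherent B A f" and g: "coherent D B g" "epi D B g"
  shows "coherent D A (f \<circ> g)"
  unfolding coherent_def
proof (intro ballI impI)
  fix a assume a: "a \<in> verts A" "3 \<le> ord A a"
  obtain b p where b: "b \<in> verts B" "f b = a" "ord B b = ord A a"
    and p: "bij_betw p (components A (verts A - {a})) (components B (verts B - {b}))"
      "\<forall>Ai\<in>components A (verts A - {a}). {x \<in> verts B. f x \<in> Ai} \<subseteq> p Ai"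
    using f a unfolding coherent_def point_of_coherence_def by blast
  obtain d q where d: "d \<in> verts D" "g d = b" "ord D d = ord B b"
    and q: "bij_betw q (components B (verts B - {b})) (components D (verts D - {d}))"
      "\<forall>Bi\<in>components B (verts B - {b}). {x \<in> verts D. g x \<in> Bi} \<subseteq> q Bi"
    using g(1) b a unfolding coherent_def point_of_coherence_def by fastforce
  have "{x \<in> verts D. (f \<circ> g) x \<in> Ai} \<subseteq> (q \<circ> p) Ai"
    if Ai: "Ai \<in> components A (verts A - {a})" for Ai
  proof -
    have "p Ai \<in> components B (verts B - {b})" using p(1) Ai unfolding bij_betw_def by auto
    then show ?thesis using p(2) q(2) Ai epiD(2)[OF g(2)] by fastforce
  qed
  then show "point_of_coherence D A (f \<circ> g) a"
    unfolding point_of_coherence_def using a b d bij_betw_trans[OF p(1) q(1)]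
    by (intro conjI bexI[of _ d] exI[of _ "q \<circ> p"]) auto
qed

lemma GP_mor_comp: "GP_mor P B A f \<Longrightarrow> GP_mor P D B g \<Longrightarrow> GP_mor P D A (f \<circ> g)"
  unfolding GP_mor_def
  using monotone_epi_comp coherent_comp monotone_epi_def by metis

lemma countable_GP: "countable (GP P)"
proof -
  have "GP P \<subseteq> {V. finite V} \<times> {E. finite E}"
  proof
    fix G assume "G \<in> GP P"
    then have "is_graph G" using GP_is_tree tree_is_graph by blast
    then have "finite (verts G)" "edges G \<subseteq> verts G \<times> verts G" unfolding is_graph_def by auto
    then have "finite (fst G)" "finite (snd G)"
      unfolding verts_def edges_def by (auto intro: finite_subset)
    then show "G \<in> {V. finite V} \<times> {E. finite E}" by (cases G) auto
  qed
  moreover have "countable ({V :: nat set. finite V} \<times> {E :: (nat \<times> nat) set. finite E})"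
    by (intro countable_SIGMA countable_Collect_finite)
  ultimately show ?thesis by (rule countable_subset)
qed

section \<open>Gates of a monotone epimorphism of trees\<close>

locale monotone_tree_epi =
  fixes X A :: graph and h :: "nat \<Rightarrow> nat"
  assumes tree_X: "is_tree X" and tree_A: "is_tree A" and monotone: "monotone_epi X A h"
begin

lemma graph_A: "is_graph A"
  using tree_A tree_is_graph by blast

lemma graph_X: "is_graph X"
  using tree_X tree_is_graph by blast

lemma epi: "epi X A h"
  using monotone unfolding monotone_epi_def by blast

lemma h_verts: "x \<in> verts X \<Longrightarrow> h x \<in> verts A"
  using epiD(2)[OF epi] by blast

lemma h_edge: "(x, x') \<in> edges X \<Longrightarrow> (h x, h x') \<in> edges A"
  using epi_edge[OF epi graph_X] by blast

definition fibre :: "nat \<Rightarrow> nat set" where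
  "fibre a = {x \<in> verts X. h x = a}"

lemma connected_fibre: "a \<in> verts A \<Longrightarrow> connected_in X (fibre a)"
  using monotone unfolding monotone_epi_def fibre_def by auto

lemma unique_edge_over:
  assumes "(x, x') \<in> edges X" "(z, z') \<in> edges X" "h x = h z" "h x' = h z'" "h x \<noteq> h x'"
  shows "x = z \<and> x' = z'"
proof (rule tree_unique_edge_between[OF tree_X connected_fibre connected_fibre])
  show "h x \<in> verts A" "h x' \<in> verts A" using h_verts is_graphD(2)[OF graph_X assms(1)] by auto
  show "fibre (h x) \<inter> fibre (h x') = {}" using assms(5) by (auto simp: fibre_def)
qed (use assms is_graphD(2)[OF graph_X] in \<open>auto simp: fibre_def\<close>)

text \<open>The gate from \<open>a\<close> towards a neighbour \<open>a'\<close> is the end over \<open>a\<close> of the unique edge of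
  \<open>X\<close> over the edge \<open>(a, a')\<close>.\<close>

definition gate :: "nat \<Rightarrow> nat \<Rightarrow> nat" where
  "gate a a' = (SOME x. \<exists>x'. (x, x') \<in> edges X \<and> h x = a \<and> h x' = a')"

lemma edge_over_nbr:
  assumes "a' \<in> nbrs A a"
  obtains x x' where "(x, x') \<in> edges X" "h x = a" "h x' = a'"
proof -
  have "a \<in> verts A" "a' \<in> verts A" "(a, a') \<in> edges A"
    using assms is_graphD(2)[OF graph_A] by (auto simp: nbrs_def)
  then show ?thesis using epiD(3)[OF epi] that by blast
qed

lemma gate_edge:
  assumes "a' \<in> nbrs A a"
  shows "(gate a a', gate a' a) \<in> edges X" "h (gate a a') = a" "gate a a' \<in> verts X"
proof -
  have "\<exists>x x'. (x, x') \<in> edges X \<and> h x = a \<and> h x' = a'" using edge_over_nbr[OF assms] by blast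
  from someI_ex[OF this] obtain x'
    where x': "(gate a a', x') \<in> edges X" "h (gate a a') = a" "h x' = a'"
    unfolding gate_def by blast
  have "\<exists>x x'. (x, x') \<in> edges X \<and> h x = a' \<and> h x' = a"
    using edge_over_nbr[OF nbrs_sym[OF graph_A assms]] by blast
  from someI_ex[OF this] obtain z'
    where z': "(gate a' a, z') \<in> edges X" "h (gate a' a) = a'" "h z' = a"
    unfolding gate_def by blast
  have "a \<noteq> a'" using assms by (auto simp: nbrs_def)
  then have "x' = gate a' a"
    using unique_edge_over[OF x'(1) is_graphD(4)[OF graph_X z'(1)]] x' z' by auto
  then show "(gate a a', gate a' a) \<in> edges X" using x' by simp
  show "h (gate a a') = a" using x' by simp
  show "gate a a' \<in> verts X" using x' is_graphD(2)[OF graph_X] by blast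
qed

lemma gate_cross:
  assumes "(x, x') \<in> edges X" "h x \<noteq> h x'"
  shows "h x' \<in> nbrs A (h x)" "x = gate (h x) (h x')" "x' = gate (h x') (h x)"
proof -
  show n: "h x' \<in> nbrs A (h x)"
    using h_edge[OF assms(1)] assms(2) h_verts is_graphD(2)[OF graph_X assms(1)]
    by (auto simp: nbrs_def)
  show "x = gate (h x) (h x')" "x' = gate (h x') (h x)"
    using unique_edge_over[OF assms(1) gate_edge(1)[OF n]] gate_edge(2)[OF n]
      gate_edge(2)[OF nbrs_sym[OF graph_A n]] assms(2)
    by auto
qed

lemma fibre_subtree: "a \<in> verts A \<Longrightarrow> is_tree (induced_graph X (fibre a))"
  using tree_induced_subtree[OF tree_X connected_fibre] .

end

text \<open>A bijection \<open>p\<close> witnessing coherence at a vertex \<open>c\<close> over \<open>a\<close>, without the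
  condition on orders.\<close>

locale coherence_bijection = monotone_tree_epi +
  fixes a c :: nat and p :: "nat set \<Rightarrow> nat set"
  assumes a: "a \<in> verts A" and c: "c \<in> verts X" "h c = a"
    and bij: "bij_betw p (components A (verts A - {a})) (components X (verts X - {c}))"
    and incl: "\<forall>Ai\<in>components A (verts A - {a}). {x \<in> verts X. h x \<in> Ai} \<subseteq> p Ai"
begin

lemma p_component: "Ai \<in> components A (verts A - {a}) \<Longrightarrow> p Ai \<in> components X (verts X - {c})"
  using bij unfolding bij_betw_def by blast

lemma p_eqI:
  assumes "Ai \<in> components A (verts A - {a})" "Aj \<in> components A (verts A - {a})"
    and "z \<in> p Ai" "z \<in> p Aj"
  shows "Ai = Aj"
proof -
  have "p Ai = p Aj" using components_eqI[OF graph_X p_component p_component] assms by blast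
  then show ?thesis using bij assms(1,2) unfolding bij_betw_def inj_on_def by blast
qed

lemma mem_p_iff:
  "Ai \<in> components A (verts A - {a}) \<Longrightarrow> z \<in> verts X \<Longrightarrow> h z \<noteq> a \<Longrightarrow> z \<in> p Ai \<longleftrightarrow> h z \<in> Ai"
  using coherence_component_iff[OF graph_X epi a bij incl] by blast

lemma nbr_component:
  "a' \<in> nbrs A a \<Longrightarrow>
    component A (verts A - {a}) a' \<in> components A (verts A - {a}) \<and>
    a' \<in> component A (verts A - {a}) a'"
  using component_self[of a' "verts A - {a}" A]
  unfolding components_eq_component_image by (auto simp: nbrs_def)

lemma gate_in_p:
  assumes a': "a' \<in> nbrs A a" and "gate a a' \<noteq> c"
  shows "gate a a' \<in> p (component A (verts A - {a}) a')"
proof -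
  have n: "a \<in> nbrs A a'" and "a' \<noteq> a" using a' nbrs_sym[OF graph_A a'] by (auto simp: nbrs_def)
  moreover have "gate a' a \<in> verts X" "h (gate a' a) = a'" using gate_edge[OF n] by auto
  ultimately have "gate a' a \<in> p (component A (verts A - {a}) a')"
    using mem_p_iff[OF nbr_component[OF a', THEN conjunct1]] nbr_component[OF a'] by simp
  moreover have "(gate a' a, gate a a') \<in> edges X"
    using is_graphD(4)[OF graph_X gate_edge(1)[OF a']] .
  ultimately show ?thesis
    using components_closed[OF p_component] nbr_component[OF a'] gate_edge(3)[OF a'] assms(2)
    by blast
qed

lemma gate_unique:
  assumes a1: "a1 \<in> nbrs A a" "gate a a1 \<noteq> c" and a2: "a2 \<in> nbrs A a" "gate a a2 \<noteq> c"
    and "(gate a a1, gate a a2) \<in> (induced_rel X (verts X - {c}))\<^sup>*"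
  shows "a1 = a2"
proof -
  have "gate a a2 \<in> p (component A (verts A - {a}) a1)"
    using components_rtrancl_closed[OF p_component gate_in_p[OF a1]] nbr_component[OF a1(1)]
        assms(5)
    by blast
  then have "component A (verts A - {a}) a1 = component A (verts A - {a}) a2"
    using p_eqI[OF nbr_component[OF a1(1), THEN conjunct1] nbr_component[OF a2(1), THEN conjunct1]]
      gate_in_p[OF a2] by blast
  then show ?thesis
    using tree_nbrs_bij_components[OF tree_A a] a1(1) a2(1) unfolding bij_betw_def inj_on_def
    by blast
qed

text \<open>Follow a path inside \<open>X - c\<close> from \<open>y\<close> to a gate; where it first leaves the fibre
  of \<open>a\<close> it passes through a gate.\<close>

lemma fibre_gate_exists:
  assumes y: "y \<in> fibre a - {c}"
  shows "\<exists>a'\<in>nbrs A a. gate a a' \<noteq> c \<and> (y, gate a a') \<in> (induced_rel X (fibre a - {c}))\<^sup>*"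
proof -
  let ?SX = "verts X - {c}" and ?SA = "verts A - {a}"
  have ySX: "y \<in> ?SX" using y by (auto simp: fibre_def)
  then have "component X ?SX y \<in> components X ?SX"
    unfolding components_eq_component_image by blast
  then obtain Ai where Ai: "Ai \<in> components A ?SA" "p Ai = component X ?SX y"
    using bij unfolding bij_betw_def by (metis imageE)
  obtain ai where ai: "ai \<in> nbrs A a" "Ai = component A ?SA ai"
    using tree_nbrs_bij_components[OF tree_A a] Ai(1) unfolding bij_betw_def by auto
  have "a \<in> nbrs A ai" "ai \<noteq> a" using ai(1) nbrs_sym[OF graph_A ai(1)] by (auto simp: nbrs_def)
  moreover have "gate ai a \<in> verts X" "h (gate ai a) = ai" using gate_edge[OF \<open>a \<in> nbrs A ai\<close>]
    by auto
  ultimately have "gate ai a \<in> p Ai"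
    using mem_p_iff[OF Ai(1)] nbr_component[OF ai(1)] ai(2) by simp
  then have "(y, gate ai a) \<in> (induced_rel X ?SX)\<^sup>*" using Ai(2) by (simp add: component_def)
  moreover have "gate ai a \<notin> fibre a - {c}"
    using gate_edge(2)[OF \<open>a \<in> nbrs A ai\<close>] \<open>ai \<noteq> a\<close> by (auto simp: fibre_def)
  ultimately obtain s t where st: "(y, s) \<in> (induced_rel X (?SX \<inter> (fibre a - {c})))\<^sup>*"
      "s \<in> fibre a - {c}" "t \<notin> fibre a - {c}" "(s, t) \<in> induced_rel X ?SX"
    using induced_rtrancl_exit[OF _ y] by blast
  have st2: "(s, t) \<in> edges X" "t \<in> ?SX" and "h s = a" "h t \<noteq> a"
    using st(2-4) by (auto simp: induced_rel_def fibre_def)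
  then have "h t \<in> nbrs A a" "s = gate a (h t)" using gate_cross[OF st2(1)] by auto
  moreover have "?SX \<inter> (fibre a - {c}) = fibre a - {c}" by (auto simp: fibre_def)
  ultimately show ?thesis using st(1,2) by auto
qed

end
section \<open>The amalgam of a cospan in \<open>\<G>_P\<close>\<close>

locale GP_cospan =
  fixes P :: "nat set" and A B C :: graph and f g :: "nat \<Rightarrow> nat"
  assumes P_ge_3: "\<forall>p\<in>P. 3 \<le> p" and A_GP: "A \<in> GP P"
    and f_mor: "GP_mor P B A f" and g_mor: "GP_mor P C A g"
    and A_no_isolated: "\<forall>a\<in>verts A. 1 \<le> ord A a"
begin

lemma B_GP: "B \<in> GP P" and C_GP: "C \<in> GP P"
  using f_mor g_mor unfolding GP_mor_def by auto

lemma tree_A: "is_tree A" and tree_B: "is_tree B" and tree_C: "is_tree C"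
  using A_GP B_GP C_GP GP_is_tree by auto

lemma graph_A: "is_graph A" and graph_B: "is_graph B" and graph_C: "is_graph C"
  using tree_A tree_B tree_C tree_is_graph by auto

lemma f_coherent: "coherent B A f" and g_coherent: "coherent C A g"
  using f_mor g_mor unfolding GP_mor_def by auto

sublocale f: monotone_tree_epi B A f
  using f_mor tree_B tree_A unfolding GP_mor_def by unfold_locales auto

sublocale g: monotone_tree_epi C A g
  using g_mor tree_C tree_A unfolding GP_mor_def by unfold_locales auto

lemma B_edge_verts: "(x, x') \<in> edges B \<Longrightarrow> x \<in> verts B \<and> x' \<in> verts B"
  and C_edge_verts: "(y, y') \<in> edges C \<Longrightarrow> y \<in> verts C \<and> y' \<in> verts C"
  using is_graphD(2)[OF graph_B] is_graphD(2)[OF graph_C] by auto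

lemma B_edge_sym: "(x, x') \<in> edges B \<Longrightarrow> (x', x) \<in> edges B"
  and C_edge_sym: "(y, y') \<in> edges C \<Longrightarrow> (y', y) \<in> edges C"
  using is_graphD(4)[OF graph_B] is_graphD(4)[OF graph_C] by auto

lemma B_edge_refl: "x \<in> verts B \<Longrightarrow> (x, x) \<in> edges B"
  and C_edge_refl: "y \<in> verts C \<Longrightarrow> (y, y) \<in> edges C"
  using is_graphD(3)[OF graph_B] is_graphD(3)[OF graph_C] by auto

lemma A_nbrs_sym: "a' \<in> nbrs A a \<Longrightarrow> a \<in> nbrs A a'"
  using nbrs_sym[OF graph_A] .

lemma ord_A_cases: "a \<in> verts A \<Longrightarrow> ord A a = 1 \<or> 3 \<le> ord A a"
  using A_GP A_no_isolated P_ge_3 unfolding GP_def by fastforce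

text \<open>The amalgam is \<open>B\<close> with, for every \<open>a\<close>, the fibre of \<open>g\<close> over \<open>a\<close> glued in: one
  vertex \<open>c\<close> of that fibre, its hub, is identified with the fibre of \<open>f\<close> over \<open>a\<close>, and every
  other vertex \<open>y\<close> is attached to the vertex of \<open>B\<close> at the end of the branch of \<open>y\<close>: the
  unique gate of the fibre that \<open>y\<close> reaches without passing \<open>c\<close>. For coherence, a hub of order
  at least 3 must be a point of coherence of \<open>g\<close>.\<close>

definition hub_for :: "nat \<Rightarrow> nat \<Rightarrow> bool" where
  "hub_for a c \<longleftrightarrow> c \<in> g.fibre a \<and>
     (\<forall>y \<in> g.fibre a - {c}. \<exists>!a'. a' \<in> nbrs A a \<and> g.gate a a' \<noteq> c \<and>
        (y, g.gate a a') \<in> (induced_rel C (g.fibre a - {c}))\<^sup>*) \<and>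
     (3 \<le> ord C c \<longrightarrow> ord C c = ord A a \<and>
        (\<exists>p. bij_betw p (components A (verts A - {a})) (components C (verts C - {c})) \<and>
             (\<forall>Ai\<in>components A (verts A - {a}). {x \<in> verts C. g x \<in> Ai} \<subseteq> p Ai)))"

lemma hub_for_branch_point:
  assumes a: "a \<in> verts A" "3 \<le> ord A a"
  shows "\<exists>c. hub_for a c"
proof -
  obtain c p where c: "c \<in> verts C" "g c = a" "ord C c = ord A a"
    and p: "bij_betw p (components A (verts A - {a})) (components C (verts C - {c}))"
      "\<forall>Ai\<in>components A (verts A - {a}). {x \<in> verts C. g x \<in> Ai} \<subseteq> p Ai"
    using g_coherent a unfolding coherent_def point_of_coherence_def by blast
  interpret cg: coherence_bijection C A g a c p
    by (intro coherence_bijection.intro g.monotone_tree_epi_axioms coherence_bijection_axioms.intro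
        a(1) c(1,2) p)
  have "\<exists>!a'. a' \<in> nbrs A a \<and> g.gate a a' \<noteq> c \<and>
      (y, g.gate a a') \<in> (induced_rel C (g.fibre a - {c}))\<^sup>*"
    if y: "y \<in> g.fibre a - {c}" for y
  proof (rule ex_ex1I)
    show "\<exists>a'. a' \<in> nbrs A a \<and> g.gate a a' \<noteq> c \<and>
        (y, g.gate a a') \<in> (induced_rel C (g.fibre a - {c}))\<^sup>*"
      using cg.fibre_gate_exists[OF y] by blast
  next
    fix a1 a2
    assume a1: "a1 \<in> nbrs A a \<and> g.gate a a1 \<noteq> c \<and>
        (y, g.gate a a1) \<in> (induced_rel C (g.fibre a - {c}))\<^sup>*"
      and a2: "a2 \<in> nbrs A a \<and> g.gate a a2 \<noteq> c \<and>
        (y, g.gate a a2) \<in> (induced_rel C (g.fibre a - {c}))\<^sup>*"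
    have "(g.gate a a1, y) \<in> (induced_rel C (g.fibre a - {c}))\<^sup>*"
      using a1 induced_rtrancl_sym[OF graph_C] by blast
    then have "(g.gate a a1, g.gate a a2) \<in> (induced_rel C (g.fibre a - {c}))\<^sup>*"
      using a2 by (blast intro: rtrancl_trans)
    then have "(g.gate a a1, g.gate a a2) \<in> (induced_rel C (verts C - {c}))\<^sup>*"
      by (rule induced_rtrancl_mono[rotated]) (auto simp: g.fibre_def)
    then show "a1 = a2" using cg.gate_unique a1 a2 by blast
  qed
  moreover have "c \<in> g.fibre a" using c by (simp add: g.fibre_def)
  ultimately have "hub_for a c" unfolding hub_for_def using c(3) p by blast
  then show ?thesis by blast
qed

lemma fibre_boundary_end_point:
  assumes a: "nbrs A a = {a'}" and y: "y \<in> g.fibre a" and z: "z \<in> nbrs C y" "g z \<noteq> a"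
  shows "y = g.gate a a'" "z = g.gate a' a"
proof -
  have e: "(y, z) \<in> edges C" using z by (auto simp: nbrs_def)
  have "g y = a" using y by (simp add: g.fibre_def)
  then show "y = g.gate a a'" "z = g.gate a' a" using g.gate_cross[OF e] z(2) a by auto
qed

lemma hub_for_end_pointI:
  assumes a: "nbrs A a = {a'}" and c: "c \<in> g.fibre a" "ord C c < 3"
    and conn: "\<And>y. y \<in> g.fibre a - {c} \<Longrightarrow> (y, g.gate a a') \<in> (induced_rel C (g.fibre a - {c}))\<^sup>*"
  shows "hub_for a c"
  unfolding hub_for_def
proof (intro conjI ballI impI)
  fix y assume y: "y \<in> g.fibre a - {c}"
  then have "g.gate a a' \<noteq> c" using conn[OF y] induced_rtrancl_cases by blast
  then show "\<exists>!a''. a'' \<in> nbrs A a \<and> g.gate a a'' \<noteq> c \<and>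
      (y, g.gate a a'') \<in> (induced_rel C (g.fibre a - {c}))\<^sup>*"
    using a conn[OF y] by auto
qed (use c in auto)

text \<open>Over an end point, the hub is a leaf of the fibre other than its gate (or the gate itself
  if the fibre is a single vertex).\<close>

lemma hub_for_end_point:
  assumes a: "a \<in> verts A" "ord A a = 1"
  shows "\<exists>c. hub_for a c"
proof -
  obtain a' where a': "nbrs A a = {a'}"
    using a(2) by (auto simp: ord_eq_card_nbrs card_1_singleton_iff)
  let ?v = "g.gate a a'"
  have v: "?v \<in> g.fibre a" using g.gate_edge[of a' a] a' by (simp add: g.fibre_def)
  show ?thesis
  proof (cases "g.fibre a = {?v}")
    case True
    have "nbrs C ?v \<subseteq> {g.gate a' a}"
      using fibre_boundary_end_point[OF a' v] True by (auto simp: nbrs_def g.fibre_def)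
    then have "card (nbrs C ?v) \<le> 1" using card_mono[of "{g.gate a' a}"] by fastforce
    then have "hub_for a ?v"
      using True by (intro hub_for_end_pointI[OF a' v]) (auto simp: ord_eq_card_nbrs)
    then show ?thesis by blast
  next
    case False
    let ?F = "induced_graph C (g.fibre a)"
    have tree: "is_tree ?F" using g.fibre_subtree[OF a(1)] .
    have "finite (g.fibre a)"
      using is_graphD(1)[OF tree_is_graph[OF tree]] by simp
    moreover obtain w where "w \<in> g.fibre a" "w \<noteq> ?v" using False v by blast
    ultimately have "2 \<le> card (verts ?F)" using v card_mono[of "g.fibre a" "{?v, w}"] by auto
    then obtain l where l: "l \<in> g.fibre a" "l \<noteq> ?v" "ord ?F l = 1"
      "connected_in ?F (g.fibre a - {l})"
      using tree_has_leaf[OF tree, of ?v] v by auto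
    have "nbrs C l \<subseteq> nbrs ?F l"
    proof
      fix z assume z: "z \<in> nbrs C l"
      then have "g z = a" using fibre_boundary_end_point(1)[OF a' l(1) z] l(2) by blast
      then show "z \<in> nbrs ?F l" using z l(1) by (auto simp: nbrs_def g.fibre_def induced_rel_def)
    qed
    then have "ord C l \<le> ord ?F l"
      unfolding ord_eq_card_nbrs by (rule card_mono[OF finite_nbrs[OF tree_is_graph[OF tree]]])
    then have "ord C l \<le> 1" using l(3) by simp
    moreover have "(y, ?v) \<in> (induced_rel C (g.fibre a - {l}))\<^sup>*" if "y \<in> g.fibre a - {l}" for y
      using l(2,4) v that induced_rel_induced_graph[of "g.fibre a - {l}" "g.fibre a" C]
      unfolding connected_in_def by auto
    ultimately have "hub_for a l" by (intro hub_for_end_pointI[OF a' l(1)]) auto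
    then show ?thesis by blast
  qed
qed

lemma hub_for_exists: "a \<in> verts A \<Longrightarrow> \<exists>c. hub_for a c"
  using ord_A_cases hub_for_branch_point hub_for_end_point by blast

definition hub :: "nat \<Rightarrow> nat" where "hub a = (SOME c. hub_for a c)"

lemma hub_for_hub: "a \<in> verts A \<Longrightarrow> hub_for a (hub a)"
  unfolding hub_def using hub_for_exists someI_ex by metis


lemma hub_in_fibre: "a \<in> verts A \<Longrightarrow> hub a \<in> verts C \<and> g (hub a) = a"
  using hub_for_hub unfolding hub_for_def g.fibre_def by auto

definition off_hub :: "nat \<Rightarrow> bool" where "off_hub y \<longleftrightarrow> y \<in> verts C \<and> y \<noteq> hub (g y)"

definition branch :: "nat \<Rightarrow> nat" where
  "branch y = (THE a'. a' \<in> nbrs A (g y) \<and> g.gate (g y) a' \<noteq> hub (g y) \<and>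
              (y, g.gate (g y) a') \<in> (induced_rel C (g.fibre (g y) - {hub (g y)}))\<^sup>*)"

definition anchor :: "nat \<Rightarrow> nat" where "anchor y = f.gate (g y) (branch y)"

lemma branch_ex1:
  assumes "off_hub y"
  shows "\<exists>!a'. a' \<in> nbrs A (g y) \<and> g.gate (g y) a' \<noteq> hub (g y) \<and>
              (y, g.gate (g y) a') \<in> (induced_rel C (g.fibre (g y) - {hub (g y)}))\<^sup>*"
proof -
  have "g y \<in> verts A" "y \<in> g.fibre (g y) - {hub (g y)}" using assms g.h_verts
    by (auto simp: off_hub_def g.fibre_def)
  then show ?thesis using hub_for_hub[of "g y"] unfolding hub_for_def by blast
qed

lemma branch_props:
  assumes "off_hub y"
  shows "branch y \<in> nbrs A (g y)" "g.gate (g y) (branch y) \<noteq> hub (g y)"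
    "(y, g.gate (g y) (branch y)) \<in> (induced_rel C (g.fibre (g y) - {hub (g y)}))\<^sup>*"
  using theI'[OF branch_ex1[OF assms]] unfolding branch_def by auto

lemma branch_eqI:
  assumes "off_hub y" "a' \<in> nbrs A (g y)" "g.gate (g y) a' \<noteq> hub (g y)"
    "(y, g.gate (g y) a') \<in> (induced_rel C (g.fibre (g y) - {hub (g y)}))\<^sup>*"
  shows "branch y = a'"
  unfolding branch_def using the1_equality[OF branch_ex1[OF assms(1)]] assms by blast

lemma branch_rtrancl:
  assumes y: "off_hub y" and p: "(y, z) \<in> (induced_rel C (g.fibre (g y) - {hub (g y)}))\<^sup>*"
  shows "off_hub z" "g z = g y" "branch z = branch y"
proof -
  have zin: "z = y \<or> z \<in> g.fibre (g y) - {hub (g y)}" using induced_rtrancl_cases[OF p] by auto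
  then show gz: "g z = g y" by (auto simp: g.fibre_def)
  show nz: "off_hub z" using zin y gz by (auto simp: off_hub_def g.fibre_def)
  have "(z, y) \<in> (induced_rel C (g.fibre (g y) - {hub (g y)}))\<^sup>*"
    using induced_rtrancl_sym[OF graph_C p] .
  then have "(z, g.gate (g y) (branch y)) \<in> (induced_rel C (g.fibre (g y) - {hub (g y)}))\<^sup>*"
    using branch_props(3)[OF y] by (rule rtrancl_trans)
  then show "branch z = branch y" using branch_eqI[OF nz] branch_props[OF y] gz by simp
qed

lemma branch_gate:
  assumes "a' \<in> nbrs A a" "g.gate a a' \<noteq> hub a"
  shows "off_hub (g.gate a a')" "branch (g.gate a a') = a'"
proof -
  have g: "g (g.gate a a') = a" "g.gate a a' \<in> verts C" using g.gate_edge[OF assms(1)] by auto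
  show n: "off_hub (g.gate a a')" using g assms(2) by (simp add: off_hub_def)
  show "branch (g.gate a a') = a'" using branch_eqI[OF n] g assms by simp
qed

lemma anchor_props: "off_hub y \<Longrightarrow> anchor y \<in> verts B \<and> f (anchor y) = g y"
  using f.gate_edge[OF branch_props(1)] unfolding anchor_def by auto

lemma anchor_gate: "a' \<in> nbrs A a \<Longrightarrow> g.gate a a' \<noteq> hub a \<Longrightarrow> anchor (g.gate a a') = f.gate a a'"
  using branch_gate g.gate_edge(2) unfolding anchor_def by simp

lemma hub_if_not_off_hub: "y \<in> verts C \<Longrightarrow> \<not> off_hub y \<Longrightarrow> y = hub (g y)"
  by (simp add: off_hub_def)

text \<open>The vertices of \<open>D\<close> are pairs \<open>(x, y)\<close> with \<open>f x = g y\<close>, coded as natural numbers by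
  \<open>prod_encode\<close>: either \<open>y\<close> is the hub over \<open>f x\<close>, or \<open>y\<close> is off the hub and \<open>x\<close> is its anchor.\<close>

definition h1 :: "nat \<Rightarrow> nat" where "h1 n = fst (prod_decode n)"
definition h2 :: "nat \<Rightarrow> nat" where "h2 n = snd (prod_decode n)"
definition dpair :: "nat \<Rightarrow> nat \<Rightarrow> nat" where "dpair x y = prod_encode (x, y)"

definition D_vertex :: "nat \<Rightarrow> bool" where
  "D_vertex n \<longleftrightarrow> (h1 n \<in> verts B \<and> h2 n = hub (f (h1 n))) \<or> (off_hub (h2 n) \<and> h1 n = anchor (h2 n))"

definition D :: graph where
  "D = (Collect D_vertex, {(n, m). D_vertex n \<and> D_vertex m \<and>
     ((h2 n = h2 m \<and> (h1 n, h1 m) \<in> edges B) \<or>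
      (h2 n \<noteq> h2 m \<and> (h2 n, h2 m) \<in> edges C \<and>
        (if g (h2 n) = g (h2 m) then h1 n = h1 m else (h1 n, h1 m) \<in> edges B)))})"

lemma h_dpair [simp]: "h1 (dpair x y) = x" "h2 (dpair x y) = y"
  by (simp_all add: h1_def h2_def dpair_def)

lemma dpair_h: "dpair (h1 n) (h2 n) = n"
  by (simp add: h1_def h2_def dpair_def)

lemma D_vertex_eqI: "h1 n = h1 m \<Longrightarrow> h2 n = h2 m \<Longrightarrow> n = m"
  by (metis dpair_h)

lemma verts_D_iff:
  "n \<in> verts D \<longleftrightarrow> (h1 n \<in> verts B \<and> h2 n = hub (f (h1 n))) \<or> (off_hub (h2 n) \<and> h1 n = anchor (h2 n))"
  by (simp add: D_def D_vertex_def)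

lemma edges_D_iff: "(n, m) \<in> edges D \<longleftrightarrow> n \<in> verts D \<and> m \<in> verts D \<and>
     ((h2 n = h2 m \<and> (h1 n, h1 m) \<in> edges B) \<or>
      (h2 n \<noteq> h2 m \<and> (h2 n, h2 m) \<in> edges C \<and>
        (if g (h2 n) = g (h2 m) then h1 n = h1 m else (h1 n, h1 m) \<in> edges B)))"
  by (simp add: D_def)

lemma verts_D_props: "n \<in> verts D \<Longrightarrow> h1 n \<in> verts B \<and> h2 n \<in> verts C \<and> f (h1 n) = g (h2 n)"
  unfolding verts_D_iff using hub_in_fibre f.h_verts anchor_props by (auto simp: off_hub_def)

lemma verts_D_off_hub: "n \<in> verts D \<Longrightarrow> off_hub (h2 n) \<Longrightarrow> h1 n = anchor (h2 n)"
  unfolding verts_D_iff using hub_in_fibre f.h_verts by (auto simp: off_hub_def)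

lemma verts_D_off_hub_unique:
  "n \<in> verts D \<Longrightarrow> m \<in> verts D \<Longrightarrow> off_hub (h2 n) \<Longrightarrow> h2 n = h2 m \<Longrightarrow> n = m"
  using verts_D_off_hub D_vertex_eqI by metis

lemma verts_D_hub: "n \<in> verts D \<Longrightarrow> \<not> off_hub (h2 n) \<Longrightarrow> h2 n = hub (f (h1 n))"
  using verts_D_props hub_if_not_off_hub by metis

lemma dpair_hub: "x \<in> verts B \<Longrightarrow> dpair x (hub (f x)) \<in> verts D"
  by (simp add: verts_D_iff)

lemma dpair_off_hub: "off_hub y \<Longrightarrow> dpair (anchor y) y \<in> verts D"
  by (simp add: verts_D_iff)

lemma dpair_fibre_hub:
  "x \<in> verts B \<Longrightarrow> f x = g y \<Longrightarrow> \<not> off_hub y \<Longrightarrow> y \<in> verts C \<Longrightarrow> dpair x y \<in> verts D"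
  using hub_if_not_off_hub by (simp add: verts_D_iff)

lemma edges_D_verts: "(n, m) \<in> edges D \<Longrightarrow> n \<in> verts D \<and> m \<in> verts D"
  by (simp add: edges_D_iff)

lemma edges_D_h1: "(n, m) \<in> edges D \<Longrightarrow> (h1 n, h1 m) \<in> edges B"
  unfolding edges_D_iff using verts_D_props B_edge_refl by (auto split: if_splits)

lemma edges_D_h2: "(n, m) \<in> edges D \<Longrightarrow> (h2 n, h2 m) \<in> edges C"
  unfolding edges_D_iff using verts_D_props C_edge_refl by (auto split: if_splits)

lemma edges_D_refl: "n \<in> verts D \<Longrightarrow> (n, n) \<in> edges D"
  unfolding edges_D_iff using verts_D_props B_edge_refl by auto

lemma edges_D_sym: "(n, m) \<in> edges D \<Longrightarrow> (m, n) \<in> edges D"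
  unfolding edges_D_iff using B_edge_sym C_edge_sym by (auto split: if_splits)

lemma graph_D: "is_graph D"
  unfolding is_graph_def
proof (intro conjI allI impI ballI)
  have "verts D \<subseteq> (\<lambda>(x, y). dpair x y) ` (verts B \<times> verts C)"
  proof
    fix n assume "n \<in> verts D"
    then have "(h1 n, h2 n) \<in> verts B \<times> verts C" using verts_D_props by auto
    then show "n \<in> (\<lambda>(x, y). dpair x y) ` (verts B \<times> verts C)"
      using dpair_h[of n] by (metis case_prod_conv image_eqI)
  qed
  moreover have "finite (verts B \<times> verts C)" using is_graphD(1)[OF graph_B] is_graphD(1)[OF graph_C]
    by auto
  ultimately show "finite (verts D)" using finite_subset by blast
  show "edges D \<subseteq> verts D \<times> verts D" using edges_D_verts by auto
qed (auto intro: edges_D_refl edges_D_sym)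

lemma dpair_gates:
  assumes "a2 \<in> nbrs A a1"
  shows "dpair (f.gate a1 a2) (g.gate a1 a2) \<in> verts D"
proof (cases "off_hub (g.gate a1 a2)")
  case True
  then have "g.gate a1 a2 \<noteq> hub a1" using g.gate_edge(2)[OF assms] by (simp add: off_hub_def)
  then have "anchor (g.gate a1 a2) = f.gate a1 a2" using anchor_gate[OF assms] by simp
  then show ?thesis using dpair_off_hub[OF True] by simp
next
  case False
  then show ?thesis using dpair_fibre_hub f.gate_edge[OF assms] g.gate_edge[OF assms] by simp
qed

lemma edge_D_gates:
  assumes "a2 \<in> nbrs A a1"
  shows "(dpair (f.gate a1 a2) (g.gate a1 a2), dpair (f.gate a2 a1) (g.gate a2 a1)) \<in> edges D"
proof -
  have n: "a1 \<in> nbrs A a2" using A_nbrs_sym[OF assms] .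
  have ne: "a1 \<noteq> a2" using assms by (auto simp: nbrs_def)
  show ?thesis
    unfolding edges_D_iff using dpair_gates[OF assms] dpair_gates[OF n] g.gate_edge[OF assms]
      g.gate_edge[OF n] f.gate_edge[OF assms] ne by auto
qed

lemma edge_D_within_fibre:
  assumes e: "(y1, y2) \<in> edges C" "y1 \<noteq> y2" "g y1 = g y2" and y1: "off_hub y1"
  shows "(dpair (anchor y1) y1, dpair (anchor y1) y2) \<in> edges D"
proof -
  have y2: "y2 \<in> verts C" using C_edge_verts[OF e(1)] by blast
  have "dpair (anchor y1) y2 \<in> verts D"
  proof (cases "off_hub y2")
    case True
    then have p: "(y1, y2) \<in> (induced_rel C (g.fibre (g y1) - {hub (g y1)}))\<^sup>*"
      using y1 e by (intro induced_rtrancl_edge) (auto simp: off_hub_def g.fibre_def)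
    have "anchor y2 = anchor y1" using branch_rtrancl[OF y1 p] by (simp add: anchor_def)
    then show ?thesis using dpair_off_hub[OF True] by simp
  next
    case False
    moreover have "anchor y1 \<in> verts B" "f (anchor y1) = g y2" using anchor_props[OF y1] e(3)
      by auto
    ultimately show ?thesis using dpair_fibre_hub y2 by blast
  qed
  then show ?thesis using dpair_off_hub[OF y1] e unfolding edges_D_iff by simp
qed

lemma lift_edge_C:
  assumes e: "(y1, y2) \<in> edges C"
  shows "\<exists>n1\<in>verts D. \<exists>n2\<in>verts D. h2 n1 = y1 \<and> h2 n2 = y2 \<and> (n1, n2) \<in> edges D"
proof -
  have y: "y1 \<in> verts C" "y2 \<in> verts C" using C_edge_verts[OF e] by auto
  consider "y1 = y2" | "g y1 \<noteq> g y2" | "y1 \<noteq> y2" "g y1 = g y2" "off_hub y1"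
    | "y1 \<noteq> y2" "g y1 = g y2" "off_hub y2"
    using hub_if_not_off_hub y by metis
  then show ?thesis
  proof cases
    case 1
    show ?thesis
    proof (cases "off_hub y1")
      case True
      then show ?thesis using 1 dpair_off_hub edges_D_refl by force
    next
      case False
      obtain x where "x \<in> verts B" "f x = g y1"
        using epiD(1)[OF f.epi] g.h_verts[OF y(1)] by (metis imageE)
      then show ?thesis using 1 dpair_fibre_hub False y edges_D_refl by force
    qed
  next
    case 2
    then have "g y2 \<in> nbrs A (g y1)" "y1 = g.gate (g y1) (g y2)" "y2 = g.gate (g y2) (g y1)"
      using g.gate_cross[OF e] by auto
    then show ?thesis using edge_D_gates edges_D_verts by (metis h_dpair(2))
  next
    case 3
    then show ?thesis using edge_D_within_fibre[OF e 3] edges_D_verts by force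
  next
    case 4
    then show ?thesis using edge_D_within_fibre[OF C_edge_sym[OF e]] edges_D_sym edges_D_verts
      by (metis h_dpair(2))
  qed
qed

lemma lift_edge_B:
  assumes e: "(x1, x2) \<in> edges B"
  shows "\<exists>n1\<in>verts D. \<exists>n2\<in>verts D. h1 n1 = x1 \<and> h1 n2 = x2 \<and> (n1, n2) \<in> edges D"
proof (cases "f x1 = f x2")
  case True
  have "x1 \<in> verts B" "x2 \<in> verts B" using B_edge_verts[OF e] by auto
  then have "dpair x1 (hub (f x1)) \<in> verts D" "dpair x2 (hub (f x2)) \<in> verts D"
    using dpair_hub by auto
  moreover from this have "(dpair x1 (hub (f x1)), dpair x2 (hub (f x2))) \<in> edges D"
    using e True unfolding edges_D_iff by simp
  ultimately show ?thesis by force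
next
  case False
  then have "f x2 \<in> nbrs A (f x1)" "x1 = f.gate (f x1) (f x2)" "x2 = f.gate (f x2) (f x1)"
    using f.gate_cross[OF e] by auto
  then show ?thesis using edge_D_gates edges_D_verts by (metis h_dpair(1))
qed

lemma h2_epi: "epi D C h2"
  using epiI[OF graph_C] verts_D_props edges_D_h2 lift_edge_C by blast

lemma h1_epi: "epi D B h1"
  using epiI[OF graph_B] verts_D_props edges_D_h1 lift_edge_B by blast

lemma connected_fibre_h2:
  assumes y: "y \<in> verts C"
  shows "connected_in D {n \<in> verts D. h2 n = y}"
proof (cases "off_hub y")
  case True
  have "{n \<in> verts D. h2 n = y} = {dpair (anchor y) y}"
    using dpair_off_hub[OF True] verts_D_off_hub_unique True by fastforce
  then show ?thesis using dpair_off_hub[OF True] unfolding connected_in_def by auto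
next
  case False
  let ?F = "{n \<in> verts D. h2 n = y}"
  have gy: "g y \<in> verts A" using g.h_verts[OF y] .
  obtain x0 where x0: "x0 \<in> verts B" "f x0 = g y" using epiD(1)[OF f.epi] gy by (metis imageE)
  have ne: "dpair x0 y \<in> ?F" using dpair_fibre_hub[OF x0 False y] by simp
  have "(n, m) \<in> (induced_rel D ?F)\<^sup>*" if nm: "n \<in> ?F" "m \<in> ?F" for n m
  proof -
    have hn: "h1 n \<in> f.fibre (g y)" "h1 m \<in> f.fibre (g y)" using nm verts_D_props
      by (auto simp: f.fibre_def)
    then have "(h1 n, h1 m) \<in> (induced_rel B (f.fibre (g y)))\<^sup>*" using f.connected_fibre[OF gy]
      unfolding connected_in_def by auto
    then have "(dpair (h1 n) y, dpair (h1 m) y) \<in> (induced_rel D ?F)\<^sup>*"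
    proof (rule induced_rtrancl_map)
      fix u v assume uv: "(u, v) \<in> induced_rel B (f.fibre (g y))"
      then have "u \<in> f.fibre (g y)" "v \<in> f.fibre (g y)" "(u, v) \<in> edges B"
        by (auto simp: induced_rel_def)
      then have "dpair u y \<in> verts D" "dpair v y \<in> verts D" "(dpair u y, dpair v y) \<in> edges D"
        using dpair_fibre_hub[OF _ _ False y] by (auto simp: f.fibre_def edges_D_iff)
      then show "(dpair u y, dpair v y) \<in> induced_rel D ?F" by (auto simp: induced_rel_def)
    qed
    then show ?thesis using nm dpair_h by (metis (mono_tags, lifting) mem_Collect_eq)
  qed
  then show ?thesis using ne unfolding connected_in_def by auto
qed

lemma off_hub_reaches_hub_nbr:
  assumes y: "off_hub y"
  obtains s where "(y, s) \<in> (induced_rel C (g.fibre (g y) - {hub (g y)}))\<^sup>*"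
    "s \<in> g.fibre (g y) - {hub (g y)}" "(s, hub (g y)) \<in> edges C"
proof -
  let ?a = "g y" and ?c = "hub (g y)"
  have a: "?a \<in> verts A" using y g.h_verts by (simp add: off_hub_def)
  have yc: "y \<in> g.fibre ?a - {?c}" "?c \<in> g.fibre ?a"
    using y hub_in_fibre[OF a] by (auto simp: off_hub_def g.fibre_def)
  then have "(y, ?c) \<in> (induced_rel C (g.fibre ?a))\<^sup>*"
    using g.connected_fibre[OF a] unfolding connected_in_def by blast
  from induced_rtrancl_exit[OF this, of "g.fibre ?a - {?c}"] yc
  obtain s t where "(y, s) \<in> (induced_rel C (g.fibre ?a \<inter> (g.fibre ?a - {?c})))\<^sup>*"
      "s \<in> g.fibre ?a - {?c}" "t \<notin> g.fibre ?a - {?c}" "(s, t) \<in> induced_rel C (g.fibre ?a)"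
    by blast
  moreover have "g.fibre ?a \<inter> (g.fibre ?a - {?c}) = g.fibre ?a - {?c}" by blast
  ultimately show ?thesis using that by (auto simp: induced_rel_def)
qed

lemma branch_rtrancl_lifts:
  assumes y: "off_hub y" and p: "(y, z) \<in> (induced_rel C (g.fibre (g y) - {hub (g y)}))\<^sup>*"
  shows "(dpair (anchor y) y, dpair (anchor y) z) \<in>
    (induced_rel D {n \<in> verts D. h1 n = anchor y})\<^sup>*"
  using p
proof (induction rule: rtrancl_induct)
  case (step z1 z2)
  show ?case
  proof (cases "z1 = z2")
    case False
    have z1: "off_hub z1" "anchor z1 = anchor y"
      using branch_rtrancl[OF y step(1)] by (auto simp: anchor_def)
    have z2: "(z1, z2) \<in> edges C" "g z1 = g z2"
      using step(2) by (auto simp: induced_rel_def g.fibre_def)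
    have "(dpair (anchor y) z1, dpair (anchor y) z2) \<in> edges D"
      using edge_D_within_fibre[OF z2(1) False z2(2) z1(1)] z1(2) by simp
    then have "(dpair (anchor y) z1, dpair (anchor y) z2) \<in>
        induced_rel D {n \<in> verts D. h1 n = anchor y}"
      using edges_D_verts by (auto simp: induced_rel_def)
    then show ?thesis using step(3) by (rule rtrancl_into_rtrancl[rotated])
  qed (use step in simp)
qed simp

lemma connected_fibre_h1:
  assumes x: "x \<in> verts B"
  shows "connected_in D {n \<in> verts D. h1 n = x}"
proof (rule connected_inI_center[OF graph_D])
  let ?F = "{n \<in> verts D. h1 n = x}" and ?c = "hub (f x)"
  show "dpair x ?c \<in> ?F" using dpair_hub[OF x] by simp
  fix n assume n: "n \<in> ?F"
  show "(n, dpair x ?c) \<in> (induced_rel D ?F)\<^sup>*"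
  proof (cases "off_hub (h2 n)")
    case False
    then have "n = dpair x ?c" using verts_D_hub n D_vertex_eqI
      by (metis (mono_tags) h_dpair mem_Collect_eq)
    then show ?thesis by simp
  next
    case True
    let ?y = "h2 n"
    have nD: "n \<in> verts D" "h1 n = x" using n by auto
    have y: "anchor ?y = x" "g ?y = f x" "n = dpair x ?y"
      using verts_D_off_hub[OF nD(1) True] verts_D_props[OF nD(1)] dpair_h[of n] nD(2) by auto
    obtain s where s: "(?y, s) \<in> (induced_rel C (g.fibre (g ?y) - {hub (g ?y)}))\<^sup>*"
        "s \<in> g.fibre (g ?y) - {hub (g ?y)}" "(s, hub (g ?y)) \<in> edges C"
      using off_hub_reaches_hub_nbr[OF True] by blast
    have "(n, dpair x s) \<in> (induced_rel D ?F)\<^sup>*"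
      using branch_rtrancl_lifts[OF True s(1)] y by simp
    moreover have sc: "(s, ?c) \<in> edges C" "s \<noteq> ?c" "g s = g ?c"
      using s(2,3) y(2) hub_in_fibre[OF f.h_verts[OF x]] by (auto simp: g.fibre_def)
    have "off_hub s" "anchor s = x"
      using branch_rtrancl[OF True s(1)] y by (auto simp: anchor_def)
    then have "(dpair x s, dpair x ?c) \<in> edges D"
      using edge_D_within_fibre[OF sc] by simp
    then have "(dpair x s, dpair x ?c) \<in> induced_rel D ?F"
      using edges_D_verts by (auto simp: induced_rel_def)
    ultimately show ?thesis by (rule rtrancl_into_rtrancl)
  qed
qed (auto)

lemma h2_monotone: "monotone_epi D C h2"
  unfolding monotone_epi_def using h2_epi connected_fibre_h2 by auto

lemma h1_monotone: "monotone_epi D B h1"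
  unfolding monotone_epi_def using h1_epi connected_fibre_h1 by auto

lemma connected_D: "connected_in D (verts D)"
proof -
  have "connected_in C (verts C)" using tree_C unfolding is_tree_def by auto
  from monotone_epi_preimage_connected[OF h2_monotone this]
  show ?thesis using verts_D_props by (metis (no_types, lifting) Collect_cong Collect_mem_eq)
qed

lemma unique_edge_over_h2:
  assumes e: "(n, m) \<in> edges D" "(n', m') \<in> edges D" "h2 n = h2 n'" "h2 m = h2 m'" "h2 n \<noteq> h2 m"
  shows "n = n' \<and> m = m'"
proof -
  have v: "n \<in> verts D" "m \<in> verts D" "n' \<in> verts D" "m' \<in> verts D" using e edges_D_verts by auto
  show ?thesis
  proof (cases "g (h2 n) = g (h2 m)")
    case False
    have b: "(h1 n, h1 m) \<in> edges B" "(h1 n', h1 m') \<in> edges B" using e False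
      by (auto simp: edges_D_iff)
    have "f (h1 n) = g (h2 n)" "f (h1 m) = g (h2 m)" "f (h1 n') = g (h2 n')" "f (h1 m') = g (h2 m')"
      using v verts_D_props by auto
    then have "h1 n = h1 n' \<and> h1 m = h1 m'" using f.unique_edge_over[OF b] e(3,4) False by auto
    then show ?thesis using e(3,4) D_vertex_eqI by blast
  next
    case True
    have h1eq: "h1 n = h1 m" "h1 n' = h1 m'" using e True by (auto simp: edges_D_iff)
    have "off_hub (h2 n) \<or> off_hub (h2 m)"
      using verts_D_props[OF v(1)] verts_D_props[OF v(2)] hub_if_not_off_hub True e(5) by metis
    then show ?thesis
    proof
      assume "off_hub (h2 n)"
      then have nn: "n = n'" using verts_D_off_hub_unique v e(3) by blast
      then have "h1 m = h1 m'" using h1eq by simp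
      then show ?thesis using nn e(4) D_vertex_eqI by blast
    next
      assume "off_hub (h2 m)"
      then have mm: "m = m'" using verts_D_off_hub_unique v e(4) by blast
      then have "h1 n = h1 n'" using h1eq by simp
      then show ?thesis using mm e(3) D_vertex_eqI by blast
    qed
  qed
qed

lemma unique_edge_over_h1:
  assumes e: "(n, m) \<in> edges D" "(n', m') \<in> edges D" "h1 n = h1 n'" "h1 m = h1 m'" "h1 n \<noteq> h1 m"
    and s: "h2 n = h2 m"
  shows "n = n' \<and> m = m'"
proof -
  have v: "n \<in> verts D" "m \<in> verts D" "n' \<in> verts D" "m' \<in> verts D" using e edges_D_verts by auto
  have hn: "\<not> off_hub (h2 n)" using verts_D_off_hub_unique v s e(5) by blast
  have hm: "\<not> off_hub (h2 m)" using hn s by simp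
  have fa: "f (h1 n) = f (h1 m)" using verts_D_props v s by metis
  show ?thesis
  proof (cases "h2 n' = h2 m'")
    case True
    have "\<not> off_hub (h2 n')" using verts_D_off_hub_unique v True e(3,4,5) by metis
    then have "h2 n' = hub (f (h1 n'))" using verts_D_hub v by blast
    moreover have "h2 n = hub (f (h1 n))" using verts_D_hub v hn by blast
    ultimately have "h2 n' = h2 n" using e(3) by simp
    then show ?thesis using e(3,4) s True D_vertex_eqI by metis
  next
    case False
    have "g (h2 n') = g (h2 m')" using verts_D_props v e(3,4) fa by metis
    then have "h1 n' = h1 m'" using e(2) False by (auto simp: edges_D_iff)
    then show ?thesis using e(3,4,5) by simp
  qed
qed

lemma D_no_cycle: "\<not> has_cycle D"
proof (rule no_cycle_if_bridges[OF graph_D])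
  fix n m assume e: "(n, m) \<in> edges D" "n \<noteq> m"
  show "bridge D n m"
  proof (cases "h2 n = h2 m")
    case False
    then show ?thesis
      using bridge_pullback[of D h2 C n m] edges_D_h2 unique_edge_over_h2[OF e(1)]
        tree_edge_bridge[OF tree_C edges_D_h2[OF e(1)]] by metis
  next
    case True
    then have "h1 n \<noteq> h1 m" using e(2) D_vertex_eqI by blast
    then show ?thesis
      using bridge_pullback[of D h1 B n m] edges_D_h1 unique_edge_over_h1[OF e(1)] True
        tree_edge_bridge[OF tree_B edges_D_h1[OF e(1)]] by metis
  qed
qed

lemma tree_D: "is_tree D"
  unfolding is_tree_def using graph_D connected_D D_no_cycle by auto


lemma ord_D_off_hub:
  assumes n: "n \<in> verts D" "off_hub (h2 n)"
  shows "ord D n = ord C (h2 n)"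
proof -
  have "bij_betw h2 (nbrs D n) (nbrs C (h2 n))"
    unfolding bij_betw_def
  proof (intro conjI)
    show "inj_on h2 (nbrs D n)"
    proof (rule inj_onI)
      fix m1 m2 assume m: "m1 \<in> nbrs D n" "m2 \<in> nbrs D n" "h2 m1 = h2 m2"
      have e: "(n, m1) \<in> edges D" "(n, m2) \<in> edges D" "m1 \<in> verts D" using m
        by (auto simp: nbrs_def)
      have "h2 n \<noteq> h2 m1" using verts_D_off_hub_unique[OF n(1) e(3) n(2)] m by (auto simp: nbrs_def)
      then show "m1 = m2" using unique_edge_over_h2[OF e(1,2)] m(3) by auto
    qed
    show "h2 ` nbrs D n = nbrs C (h2 n)"
    proof
      show "h2 ` nbrs D n \<subseteq> nbrs C (h2 n)"
      proof
        fix z assume "z \<in> h2 ` nbrs D n"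
        then obtain m where m: "m \<in> nbrs D n" "z = h2 m" by auto
        have e: "(n, m) \<in> edges D" "m \<in> verts D" "m \<noteq> n" using m by (auto simp: nbrs_def)
        have "h2 m \<noteq> h2 n" using verts_D_off_hub_unique[OF n(1) e(2) n(2)] e(3) by auto
        then show "z \<in> nbrs C (h2 n)"
          using edges_D_h2[OF e(1)] verts_D_props[OF e(2)] m by (auto simp: nbrs_def)
      qed
    next
      show "nbrs C (h2 n) \<subseteq> h2 ` nbrs D n"
      proof
        fix z assume z: "z \<in> nbrs C (h2 n)"
        then have "(h2 n, z) \<in> edges C" by (simp add: nbrs_def)
        then obtain n1 n2 where nn: "n1 \<in> verts D" "n2 \<in> verts D" "h2 n1 = h2 n" "h2 n2 = z"
            "(n1, n2) \<in> edges D"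
          using lift_edge_C by blast
        have "n1 = n" using verts_D_off_hub_unique[OF n(1) nn(1) n(2)] nn(3) by simp
        moreover have "n2 \<noteq> n" using nn z by (auto simp: nbrs_def)
        ultimately have "n2 \<in> nbrs D n" using nn by (auto simp: nbrs_def)
        then show "z \<in> h2 ` nbrs D n" using nn by blast
      qed
    qed
  qed
  then show ?thesis by (simp add: ord_eq_card_nbrs bij_betw_same_card)
qed

text \<open>Collapsing every branch glued at \<open>x\<close> onto the neighbour of \<open>x\<close> it points to retracts
  \<open>D\<close> minus the hub copy of \<open>x\<close> onto \<open>B - x\<close>.\<close>

definition retract_B :: "nat \<Rightarrow> nat \<Rightarrow> nat" where
  "retract_B x m = (if h1 m = x \<and> off_hub (h2 m) then f.gate (branch (h2 m)) (f x) else h1 m)"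

context
  fixes x assumes x: "x \<in> verts B"
begin

lemma off_hub_if_h1_eq:
  assumes "m \<in> verts D" "m \<noteq> dpair x (hub (f x))" "h1 m = x"
  shows "off_hub (h2 m)"
  using assms verts_D_hub D_vertex_eqI by (metis h_dpair)

lemma hub_copy_nbr_off_hub:
  assumes m: "m \<in> nbrs D (dpair x (hub (f x)))" "h1 m = x"
  shows "off_hub (h2 m)" "g (h2 m) = f x" "anchor (h2 m) = x"
    "f.gate (f x) (branch (h2 m)) = x" "branch (h2 m) \<in> nbrs A (f x)" "h2 m \<in> nbrs C (hub (f x))"
proof -
  have mD: "m \<in> verts D" "m \<noteq> dpair x (hub (f x))" and e: "(dpair x (hub (f x)), m) \<in> edges D"
    using m(1) by (auto simp: nbrs_def)
  show y: "off_hub (h2 m)" using off_hub_if_h1_eq[OF mD m(2)] .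
  show "anchor (h2 m) = x" and gy: "g (h2 m) = f x"
    using verts_D_off_hub[OF mD(1) y] verts_D_props[OF mD(1)] m(2) by auto
  then show "f.gate (f x) (branch (h2 m)) = x" "branch (h2 m) \<in> nbrs A (f x)"
    using branch_props(1)[OF y] unfolding anchor_def by auto
  show "h2 m \<in> nbrs C (hub (f x))"
    using edges_D_h2[OF e] y gy verts_D_props[OF mD(1)] by (auto simp: nbrs_def off_hub_def)
qed

lemma hub_copy_nbr_cases:
  assumes m: "m \<in> nbrs D (dpair x (hub (f x)))" "h1 m \<noteq> x"
  shows "(h2 m = hub (f x) \<and> f (h1 m) = f x) \<or>
    (f (h1 m) \<in> nbrs A (f x) \<and> hub (f x) = g.gate (f x) (f (h1 m)) \<and>
      h2 m = g.gate (f (h1 m)) (f x))"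
proof -
  let ?c = "hub (f x)"
  have e: "(dpair x ?c, m) \<in> edges D" and mD: "m \<in> verts D" using m(1) by (auto simp: nbrs_def)
  have c: "g ?c = f x" using hub_in_fibre[OF f.h_verts[OF x]] by simp
  have fm: "f (h1 m) = g (h2 m)" using verts_D_props[OF mD] by simp
  show ?thesis
  proof (cases "h2 m = ?c")
    case False
    then have "(?c, h2 m) \<in> edges C" "g ?c \<noteq> g (h2 m)"
      using e m(2) unfolding edges_D_iff by (auto split: if_splits)
    then show ?thesis using g.gate_cross c fm by metis
  qed (use c fm in simp)
qed

lemma retract_B_hub_copy_nbr:
  assumes m: "m \<in> nbrs D (dpair x (hub (f x)))"
  shows "retract_B x m \<in> nbrs B x"
proof (cases "h1 m = x")
  case True
  note y = hub_copy_nbr_off_hub[OF m True]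
  have n: "f x \<in> nbrs A (branch (h2 m))" using A_nbrs_sym[OF y(5)] .
  have "(x, f.gate (branch (h2 m)) (f x)) \<in> edges B" "f (f.gate (branch (h2 m)) (f x)) \<noteq> f x"
    using f.gate_edge[OF y(5)] f.gate_edge(2)[OF n] y(4,5) by (auto simp: nbrs_def)
  then show ?thesis
    using True y(1) f.gate_edge(3)[OF n] by (auto simp: retract_B_def nbrs_def)
next
  case False
  have e: "(dpair x (hub (f x)), m) \<in> edges D" and mD: "m \<in> verts D" using m
    by (auto simp: nbrs_def)
  have "(x, h1 m) \<in> edges B" using edges_D_h1[OF e] by simp
  then show ?thesis using False verts_D_props[OF mD] by (auto simp: retract_B_def nbrs_def)
qed

lemma retract_B_inj: "inj_on (retract_B x) (nbrs D (dpair x (hub (f x))))"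
proof -
  let ?c = "hub (f x)"
  have mixed: False
    if m: "m1 \<in> nbrs D (dpair x ?c)" "m2 \<in> nbrs D (dpair x ?c)" "h1 m1 = x" "h1 m2 \<noteq> x"
      and eq: "retract_B x m1 = retract_B x m2" for m1 m2
  proof -
    note y = hub_copy_nbr_off_hub[OF m(1,3)]
    have "h1 m2 = f.gate (branch (h2 m1)) (f x)" using eq m(3,4) y(1) by (simp add: retract_B_def)
    then have "f (h1 m2) = branch (h2 m1)" using f.gate_edge(2)[OF A_nbrs_sym[OF y(5)]] by simp
    then have "hub (f x) = g.gate (f x) (branch (h2 m1))"
      using hub_copy_nbr_cases[OF m(2,4)] y(5) by (auto simp: nbrs_def)
    then show False using branch_props(2)[OF y(1)] y(2) by simp
  qed
  show ?thesis
  proof (rule inj_onI)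
    fix m1 m2 assume m: "m1 \<in> nbrs D (dpair x ?c)" "m2 \<in> nbrs D (dpair x ?c)"
      and eq: "retract_B x m1 = retract_B x m2"
    consider "h1 m1 = x" "h1 m2 = x" | "h1 m1 \<noteq> x" "h1 m2 \<noteq> x"
      using mixed[OF m(1,2) _ _ eq] mixed[OF m(2,1) _ _ eq[symmetric]] by blast
    then show "m1 = m2"
    proof cases
      case 1
      note y1 = hub_copy_nbr_off_hub[OF m(1) 1(1)] and y2 = hub_copy_nbr_off_hub[OF m(2) 1(2)]
      have "f.gate (branch (h2 m1)) (f x) = f.gate (branch (h2 m2)) (f x)"
        using eq 1 y1(1) y2(1) by (simp add: retract_B_def)
      then have "branch (h2 m1) = branch (h2 m2)"
        using f.gate_edge(2)[OF A_nbrs_sym[OF y1(5)]] f.gate_edge(2)[OF A_nbrs_sym[OF y2(5)]]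
        by metis
      then have "(h2 m1, h2 m2) \<in> (induced_rel C (g.fibre (f x) - {?c}))\<^sup>*"
        using branch_props(3)[OF y1(1)] branch_props(3)[OF y2(1)] y1(2) y2(2)
          induced_rtrancl_sym[OF graph_C] by (metis rtrancl_trans)
      then have "(h2 m1, h2 m2) \<in> (induced_rel C (verts C - {?c}))\<^sup>*"
        by (rule induced_rtrancl_mono[rotated]) (auto simp: g.fibre_def)
      then have "h2 m1 = h2 m2"
        using tree_nbrs_separated[OF tree_C _ y1(6) y2(6)] hub_in_fibre[OF f.h_verts[OF x]] by blast
      then show ?thesis using 1 D_vertex_eqI by simp
    next
      case 2
      then have "h1 m1 = h1 m2" using eq by (simp add: retract_B_def)
      moreover from this have "h2 m1 = h2 m2"
        using hub_copy_nbr_cases[OF m(1) 2(1)] hub_copy_nbr_cases[OF m(2) 2(2)]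
        by (auto simp: nbrs_def)
      ultimately show ?thesis using D_vertex_eqI by blast
    qed
  qed
qed

text \<open>A neighbour \<open>x'\<close> of \<open>x\<close> in another fibre is hit either by the edge of \<open>D\<close> over the
  gates, if the hub is the gate towards \<open>f x'\<close>, or else by the vertex at the start of the branch
  of that gate.\<close>

lemma retract_B_surj: "nbrs B x \<subseteq> retract_B x ` nbrs D (dpair x (hub (f x)))"
proof
  let ?a = "f x" and ?c = "hub (f x)"
  fix x' assume x': "x' \<in> nbrs B x"
  have ex: "(x, x') \<in> edges B" "x' \<noteq> x" "x' \<in> verts B" using x' by (auto simp: nbrs_def)
  have nbr: "m \<in> nbrs D (dpair x ?c)" if "(dpair x ?c, m) \<in> edges D" "m \<noteq> dpair x ?c" for m
    using that edges_D_verts by (auto simp: nbrs_def)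
  show "x' \<in> retract_B x ` nbrs D (dpair x ?c)"
  proof (cases "f x' = ?a")
    case True
    have "(dpair x ?c, dpair x' ?c) \<in> edges D"
      using dpair_hub[OF x] dpair_hub[OF ex(3)] True ex(1) unfolding edges_D_iff by simp
    moreover have "retract_B x (dpair x' ?c) = x'" using ex(2) by (simp add: retract_B_def)
    ultimately show ?thesis using nbr ex(2) by (metis h_dpair(1) image_eqI)
  next
    case False
    let ?a' = "f x'"
    have bc: "?a' \<in> nbrs A ?a" "x = f.gate ?a ?a'" "x' = f.gate ?a' ?a"
      using f.gate_cross[OF ex(1)] False by auto
    show ?thesis
    proof (cases "g.gate ?a ?a' = ?c")
      case True
      let ?m = "dpair x' (g.gate ?a' ?a)"
      have "(dpair x ?c, ?m) \<in> edges D" using edge_D_gates[OF bc(1)] True bc by simp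
      moreover have "retract_B x ?m = x'" using ex(2) by (simp add: retract_B_def)
      ultimately show ?thesis using nbr ex(2) by (metis h_dpair(1) image_eqI)
    next
      case False
      note y = branch_gate[OF bc(1) False]
      have gy: "g (g.gate ?a ?a') = ?a" using g.gate_edge(2)[OF bc(1)] .
      obtain s where s: "(g.gate ?a ?a', s) \<in> (induced_rel C (g.fibre ?a - {?c}))\<^sup>*"
          "s \<in> g.fibre ?a - {?c}" "(s, ?c) \<in> edges C"
        using off_hub_reaches_hub_nbr[OF y(1), unfolded gy] by blast
      have "off_hub s" "branch s = ?a'"
        using branch_rtrancl[OF y(1)] s(1) gy y(2) by auto
      moreover have "g s = g ?c" "s \<noteq> ?c"
        using s(2) hub_in_fibre[OF f.h_verts[OF x]] by (auto simp: g.fibre_def)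
      ultimately have "(dpair x s, dpair x ?c) \<in> edges D"
        using edge_D_within_fibre[OF s(3)] bc(2) s(2) by (simp add: anchor_def g.fibre_def)
      moreover have "retract_B x (dpair x s) = x'"
        using \<open>off_hub s\<close> \<open>branch s = ?a'\<close> bc(3) by (simp add: retract_B_def)
      ultimately show ?thesis using nbr[OF edges_D_sym] \<open>s \<noteq> ?c\<close> by (metis h_dpair(2) image_eqI)
    qed
  qed
qed

lemma ord_D_hub_copy: "ord D (dpair x (hub (f x))) = ord B x"
proof -
  have "retract_B x ` nbrs D (dpair x (hub (f x))) = nbrs B x"
    using retract_B_hub_copy_nbr retract_B_surj by blast
  then have "bij_betw (retract_B x) (nbrs D (dpair x (hub (f x)))) (nbrs B x)"
    using retract_B_inj by (simp add: bij_betw_def)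
  then show ?thesis by (simp add: ord_eq_card_nbrs bij_betw_same_card)
qed

lemma retract_B_vertex:
  assumes m: "m \<in> verts D" "m \<noteq> dpair x (hub (f x))"
  shows "retract_B x m \<in> verts B - {x}"
proof (cases "h1 m = x")
  case True
  then have y: "off_hub (h2 m)" using off_hub_if_h1_eq[OF m] by blast
  have "g (h2 m) = f x" "anchor (h2 m) = x"
    using verts_D_props[OF m(1)] verts_D_off_hub[OF m(1) y] True by auto
  then have b: "branch (h2 m) \<in> nbrs A (f x)" using branch_props(1)[OF y] by simp
  then show ?thesis
    using True y f.gate_edge(2,3)[OF A_nbrs_sym[OF b]] by (auto simp: retract_B_def nbrs_def)
qed (use verts_D_props[OF m(1)] in \<open>simp add: retract_B_def\<close>)

lemma retract_B_edge_to_branch: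
  assumes e: "(q, r) \<in> edges D" and q: "h1 q \<noteq> x" and r: "h1 r = x" "off_hub (h2 r)"
  shows "retract_B x r = h1 q"
proof -
  have v: "q \<in> verts D" "r \<in> verts D" using edges_D_verts[OF e] by auto
  have "h2 q \<noteq> h2 r" using verts_D_off_hub_unique[OF v(2,1) r(2)] q r(1) by auto
  then have edges: "(h2 r, h2 q) \<in> edges C" "g (h2 r) \<noteq> g (h2 q)" "(h1 q, x) \<in> edges B"
    using e q r(1) C_edge_sym unfolding edges_D_iff by (auto split: if_splits)
  have gr: "g (h2 r) = f x" and gq: "g (h2 q) = f (h1 q)"
    using verts_D_props[OF v(2)] verts_D_props[OF v(1)] r(1) by auto
  have "g (h2 q) \<in> nbrs A (f x)" "h2 r = g.gate (f x) (g (h2 q))"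
    using g.gate_cross[OF edges(1) edges(2)] gr by auto
  moreover have "h2 r \<noteq> hub (f x)" using r(2) gr by (simp add: off_hub_def)
  ultimately have "branch (h2 r) = g (h2 q)" using branch_gate by metis
  moreover have "h1 q = f.gate (f (h1 q)) (f x)"
    using f.gate_cross[OF edges(3)] edges(2) gr gq by auto
  ultimately show ?thesis using r gq by (simp add: retract_B_def)
qed

lemma retract_B_edge:
  assumes e: "(q, r) \<in> edges D" and qr: "q \<noteq> dpair x (hub (f x))" "r \<noteq> dpair x (hub (f x))"
  shows "(retract_B x q, retract_B x r) \<in> edges B"
proof -
  have v: "q \<in> verts D" "r \<in> verts D" using edges_D_verts[OF e] by auto
  have refl: "(retract_B x r, retract_B x r) \<in> edges B" "(retract_B x q, retract_B x q) \<in> edges B"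
    using B_edge_refl retract_B_vertex[OF v(2) qr(2)] retract_B_vertex[OF v(1) qr(1)] by auto
  consider "h1 q \<noteq> x" "h1 r \<noteq> x" | "h1 q \<noteq> x" "h1 r = x" | "h1 q = x" "h1 r \<noteq> x"
    | "h1 q = x" "h1 r = x" by blast
  then show ?thesis
  proof cases
    case 1
    then show ?thesis using edges_D_h1[OF e] by (simp add: retract_B_def)
  next
    case 2
    then show ?thesis
      using retract_B_edge_to_branch[OF e 2 off_hub_if_h1_eq[OF v(2) qr(2) 2(2)]] refl(1)
      by (simp add: retract_B_def)
  next
    case 3
    then show ?thesis
      using retract_B_edge_to_branch[OF edges_D_sym[OF e] 3(2,1) off_hub_if_h1_eq[OF v(1) qr(1)
          3(1)]]
        refl(2) by (simp add: retract_B_def)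
  next
    case 4
    have y: "off_hub (h2 q)" "off_hub (h2 r)" using off_hub_if_h1_eq v qr 4 by blast+
    show ?thesis
    proof (cases "h2 q = h2 r")
      case False
      have "g (h2 q) = g (h2 r)" using verts_D_props[OF v(1)] verts_D_props[OF v(2)] 4 by simp
      then have "(h2 q, h2 r) \<in> (induced_rel C (g.fibre (g (h2 q)) - {hub (g (h2 q))}))\<^sup>*"
        using edges_D_h2[OF e] y False
        by (intro induced_rtrancl_edge) (auto simp: off_hub_def g.fibre_def)
      then have "branch (h2 r) = branch (h2 q)" using branch_rtrancl[OF y(1)] by blast
      then show ?thesis using refl(1) 4 y by (simp add: retract_B_def)
    qed (use 4 D_vertex_eqI refl in metis)
  qed
qed

lemma coherence_point_h1:
  assumes "3 \<le> ord B x"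
  shows "point_of_coherence D B h1 x"
proof (rule point_of_coherence_if_separating[OF tree_D tree_B h1_monotone x assms dpair_hub[OF x]])
  show "h1 (dpair x (hub (f x))) = x" by simp
  show "ord D (dpair x (hub (f x))) = ord B x" by (rule ord_D_hub_copy)
next
  let ?d = "dpair x (hub (f x))"
  fix u u' w w' assume uu: "u \<in> nbrs B x" "u' \<in> nbrs B x" "u \<noteq> u'" "w \<in> verts D" "w' \<in> verts D"
    "h1 w = u" "h1 w' = u'"
  show "(w, w') \<notin> (induced_rel D (verts D - {?d}))\<^sup>*"
  proof
    assume "(w, w') \<in> (induced_rel D (verts D - {?d}))\<^sup>*"
    then have "(retract_B x w, retract_B x w') \<in> (induced_rel B (verts B - {x}))\<^sup>*"
    proof (rule induced_rtrancl_map)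
      fix q r assume "(q, r) \<in> induced_rel D (verts D - {?d})"
      then have "(q, r) \<in> edges D" "q \<in> verts D - {?d}" "r \<in> verts D - {?d}"
        by (auto simp: induced_rel_def)
      then show "(retract_B x q, retract_B x r) \<in> induced_rel B (verts B - {x})"
        using retract_B_edge retract_B_vertex by (auto simp: induced_rel_def)
    qed
    moreover have "retract_B x w = u" "retract_B x w' = u'" using uu
      by (auto simp: retract_B_def nbrs_def)
    ultimately show False using tree_nbrs_separated[OF tree_B x uu(1-3)] by simp
  qed
qed

end

lemma ord_D_hub:
  assumes n: "n \<in> verts D" "\<not> off_hub (h2 n)"
  shows "ord D n = ord B (h1 n)"
proof -
  have "dpair (h1 n) (hub (f (h1 n))) = n" using verts_D_hub[OF n] dpair_h[of n] by simp
  then show ?thesis using ord_D_hub_copy[OF conjunct1[OF verts_D_props[OF n(1)]]] by simp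
qed

lemma D_GP: "D \<in> GP P"
  unfolding GP_def
proof (intro CollectI conjI ballI)
  show "is_tree D" by (rule tree_D)
  fix n assume n: "n \<in> verts D"
  show "ord D n \<le> 1 \<or> ord D n \<in> P"
  proof (cases "off_hub (h2 n)")
    case True
    then show ?thesis using ord_D_off_hub[OF n True] C_GP verts_D_props[OF n] unfolding GP_def
      by auto
  next
    case False
    then show ?thesis using ord_D_hub[OF n False] B_GP verts_D_props[OF n] unfolding GP_def by auto
  qed
qed

lemma coherence_point_h2_off_hub:
  assumes y: "y \<in> verts C" "3 \<le> ord C y" "off_hub y"
  shows "point_of_coherence D C h2 y"
proof (rule point_of_coherence_if_separating
    [OF tree_D tree_C h2_monotone y(1,2) dpair_off_hub[OF y(3)]])
  show "h2 (dpair (anchor y) y) = y" by simp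
  show "ord D (dpair (anchor y) y) = ord C y" using ord_D_off_hub[OF dpair_off_hub[OF y(3)]] y
    by simp
next
  let ?d = "dpair (anchor y) y"
  fix u u' w w' assume uu: "u \<in> nbrs C y" "u' \<in> nbrs C y" "u \<noteq> u'" "w \<in> verts D" "w' \<in> verts D"
    "h2 w = u" "h2 w' = u'"
  have off_d: "h2 m \<noteq> y" if m: "m \<in> verts D - {?d}" for m
  proof
    assume "h2 m = y"
    then have "?d = m" using verts_D_off_hub_unique[OF dpair_off_hub[OF y(3)], of m] m y(3) by simp
    then show False using m by simp
  qed
  show "(w, w') \<notin> (induced_rel D (verts D - {?d}))\<^sup>*"
  proof
    assume "(w, w') \<in> (induced_rel D (verts D - {?d}))\<^sup>*"
    then have "(h2 w, h2 w') \<in> (induced_rel C (verts C - {y}))\<^sup>*"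
    proof (rule induced_rtrancl_map)
      fix q r assume "(q, r) \<in> induced_rel D (verts D - {?d})"
      then show "(h2 q, h2 r) \<in> induced_rel C (verts C - {y})"
        using off_d edges_D_h2 verts_D_props by (auto simp: induced_rel_def)
    qed
    then show False using tree_nbrs_separated[OF tree_C y(1) uu(1-3)] uu by simp
  qed
qed

text \<open>At a hub \<open>y\<close> that is a point of coherence of \<open>g\<close> (bijection \<open>pg\<close>), with \<open>b\<close> a point of
  coherence of \<open>f\<close> over the same vertex (bijection \<open>pf\<close>), a vertex of \<open>D\<close> other than \<open>(b, y)\<close>
  lies over the component \<open>Ai\<close> of \<open>A - g y\<close> when its \<open>C\<close>-coordinate lies in \<open>pg Ai\<close> or, in the
  copy of \<open>B\<close> at \<open>y\<close>, its \<open>B\<close>-coordinate lies in \<open>pf Ai\<close>.\<close>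

context
  fixes y b pf pg
  assumes y: "y \<in> verts C" "\<not> off_hub y"
    and cf: "coherence_bijection B A f (g y) b pf" and cg: "coherence_bijection C A g (g y) y pg"
begin

interpretation cf: coherence_bijection B A f "g y" b pf by (rule cf)
interpretation cg: coherence_bijection C A g "g y" y pg by (rule cg)

lemma hub_eq: "hub (g y) = y"
  using hub_if_not_off_hub[OF y] by simp

lemma hub_copy_edge_component:
  assumes e: "(q, r) \<in> edges D" "h2 q = y" "h2 r \<noteq> y" and q: "h1 q \<noteq> b"
  shows "\<exists>Aj\<in>components A (verts A - {g y}). h1 q \<in> pf Aj \<and> h2 r \<in> pg Aj"
proof -
  let ?a = "g y"
  have v: "q \<in> verts D" "r \<in> verts D" using edges_D_verts[OF e(1)] by auto
  have fq: "f (h1 q) = ?a" using verts_D_props[OF v(1)] e(2) by simp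
  have eC: "(y, h2 r) \<in> edges C" using edges_D_h2[OF e(1)] e(2) by simp
  show ?thesis
  proof (cases "g (h2 r) = ?a")
    case True
    then have hr: "h1 r = h1 q" using e unfolding edges_D_iff by auto
    have s: "off_hub (h2 r)" using True e(3) hub_eq verts_D_props[OF v(2)]
      by (simp add: off_hub_def)
    let ?a' = "branch (h2 r)"
    have a': "?a' \<in> nbrs A ?a" "f.gate ?a ?a' = h1 q"
      using branch_props(1)[OF s] verts_D_off_hub[OF v(2) s] hr True by (simp_all add: anchor_def)
    have "g.gate ?a ?a' \<in> pg (component A (verts A - {?a}) ?a')"
      using cg.gate_in_p[OF a'(1)] branch_props(2)[OF s] True hub_eq by simp
    moreover have "(h2 r, g.gate ?a ?a') \<in> (induced_rel C (g.fibre ?a - {y}))\<^sup>*"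
      using branch_props(3)[OF s] True hub_eq by simp
    then have "(h2 r, g.gate ?a ?a') \<in> (induced_rel C (verts C - {y}))\<^sup>*"
      by (rule induced_rtrancl_mono[rotated]) (auto simp: g.fibre_def)
    then have "(g.gate ?a ?a', h2 r) \<in> (induced_rel C (verts C - {y}))\<^sup>*"
      by (rule induced_rtrancl_sym[OF graph_C])
    ultimately have "h2 r \<in> pg (component A (verts A - {?a}) ?a')"
      using components_rtrancl_closed[OF cg.p_component] cg.nbr_component[OF a'(1)] by blast
    moreover have "h1 q \<in> pf (component A (verts A - {?a}) ?a')"
      using cf.gate_in_p[OF a'(1)] a'(2) q by simp
    ultimately show ?thesis using cg.nbr_component[OF a'(1)] by blast
  next
    case False
    then have eB: "(h1 q, h1 r) \<in> edges B" using e unfolding edges_D_iff by auto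
    let ?a' = "g (h2 r)"
    have a': "?a' \<in> nbrs A ?a" "h2 r = g.gate ?a' ?a"
      using g.gate_cross[OF eC] False by auto
    have "h1 q = f.gate ?a ?a'"
      using f.gate_cross[OF eB] fq False verts_D_props[OF v(2)] by auto
    then have "h1 q \<in> pf (component A (verts A - {?a}) ?a')" using cf.gate_in_p[OF a'(1)] q by simp
    moreover have "h2 r \<in> pg (component A (verts A - {?a}) ?a')"
      using cg.mem_p_iff[OF cg.nbr_component[OF a'(1), THEN conjunct1]] cg.nbr_component[OF a'(1)]
        verts_D_props[OF v(2)] False by simp
    ultimately show ?thesis using cg.nbr_component[OF a'(1)] by blast
  qed
qed

lemma lies_over_component_closed:
  assumes Ai: "Ai \<in> components A (verts A - {g y})"
    and e: "(q, r) \<in> edges D" "q \<noteq> dpair b y" "r \<noteq> dpair b y"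
    and q: "(h2 q \<noteq> y \<and> h2 q \<in> pg Ai) \<or> (h2 q = y \<and> h1 q \<in> pf Ai)"
  shows "(h2 r \<noteq> y \<and> h2 r \<in> pg Ai) \<or> (h2 r = y \<and> h1 r \<in> pf Ai)"
proof -
  have v: "q \<in> verts D" "r \<in> verts D" using edges_D_verts[OF e(1)] by auto
  have not_b: "h1 m \<noteq> b" if "m \<in> verts D" "m \<noteq> dpair b y" "h2 m = y" for m
    using that D_vertex_eqI by (metis h_dpair)
  consider "h2 q \<noteq> y" "h2 r \<noteq> y" | "h2 q = y" "h2 r = y" | "h2 q = y" "h2 r \<noteq> y"
    | "h2 q \<noteq> y" "h2 r = y" by blast
  then show ?thesis
  proof cases
    case 1
    then show ?thesis
      using components_closed[OF cg.p_component[OF Ai]] q edges_D_h2[OF e(1)] verts_D_props[OF v(2)]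
      by blast
  next
    case 2
    then show ?thesis
      using components_closed[OF cf.p_component[OF Ai]] q edges_D_h1[OF e(1)] verts_D_props[OF v(2)]
        not_b[OF v(2) e(3)] by blast
  next
    case 3
    then obtain Aj where "Aj \<in> components A (verts A - {g y})" "h1 q \<in> pf Aj" "h2 r \<in> pg Aj"
      using hub_copy_edge_component[OF e(1) 3 not_b[OF v(1) e(2)]] by blast
    then show ?thesis using cf.p_eqI[OF Ai] q 3 by blast
  next
    case 4
    then obtain Aj where "Aj \<in> components A (verts A - {g y})" "h1 r \<in> pf Aj" "h2 q \<in> pg Aj"
      using hub_copy_edge_component[OF edges_D_sym[OF e(1)] 4(2,1) not_b[OF v(2) e(3)]] by blast
    then show ?thesis using cg.p_eqI[OF Ai] q 4 by blast
  qed
qed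

lemma coherence_point_h2_hub:
  assumes "3 \<le> ord C y" "ord B b = ord C y"
  shows "point_of_coherence D C h2 y"
proof -
  have d: "dpair b y \<in> verts D" using dpair_fibre_hub cf.c cg.c y by blast
  show ?thesis
  proof (rule point_of_coherence_if_separating[OF tree_D tree_C h2_monotone y(1) assms(1) d])
    show "h2 (dpair b y) = y" by simp
    show "ord D (dpair b y) = ord C y"
      using ord_D_hub_copy[OF cf.c(1)] cf.c(2) hub_eq assms(2) by simp
  next
    let ?d = "dpair b y"
    fix u u' w w' assume uu: "u \<in> nbrs C y" "u' \<in> nbrs C y" "u \<noteq> u'" "w \<in> verts D" "w' \<in> verts D"
      "h2 w = u" "h2 w' = u'"
    have "component C (verts C - {y}) u \<in> components C (verts C - {y})"
      using uu(1) unfolding components_eq_component_image by (auto simp: nbrs_def)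
    then obtain Ai where Ai: "Ai \<in> components A (verts A - {g y})"
        "pg Ai = component C (verts C - {y}) u"
      using cg.bij unfolding bij_betw_def by (metis imageE)
    let ?S = "{m. (h2 m \<noteq> y \<and> h2 m \<in> pg Ai) \<or> (h2 m = y \<and> h1 m \<in> pf Ai)}"
    show "(w, w') \<notin> (induced_rel D (verts D - {?d}))\<^sup>*"
    proof
      assume "(w, w') \<in> (induced_rel D (verts D - {?d}))\<^sup>*"
      moreover have "w \<in> ?S" using uu Ai(2) component_self[of u "verts C - {y}" C]
        by (auto simp: nbrs_def)
      ultimately have "w' \<in> ?S"
      proof (rule induced_rtrancl_closed)
        fix q r assume qr: "(q, r) \<in> edges D" "q \<in> ?S" "r \<in> verts D - {?d}"
        have "q \<noteq> ?d" using qr(2) components_subset[OF cf.p_component[OF Ai(1)]] by auto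
        then show "r \<in> ?S" using lies_over_component_closed[OF Ai(1) qr(1)] qr by blast
      qed
      then have "(u, u') \<in> (induced_rel C (verts C - {y}))\<^sup>*"
        using uu Ai(2) by (auto simp: component_def nbrs_def)
      then show False using tree_nbrs_separated[OF tree_C y(1) uu(1-3)] by simp
    qed
  qed
qed

end

lemma h2_coherent: "coherent D C h2"
  unfolding coherent_def
proof (intro ballI impI)
  fix y assume y: "y \<in> verts C" "3 \<le> ord C y"
  show "point_of_coherence D C h2 y"
  proof (cases "off_hub y")
    case False
    then have hub: "hub (g y) = y" using hub_if_not_off_hub[OF y(1)] by simp
    obtain pg where "ord C y = ord A (g y)"
        "bij_betw pg (components A (verts A - {g y})) (components C (verts C - {y}))"
        "\<forall>Ai\<in>components A (verts A - {g y}). {x \<in> verts C. g x \<in> Ai} \<subseteq> pg Ai"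
      using hub_for_hub[OF g.h_verts[OF y(1)]] y(2) unfolding hub hub_for_def by blast
    moreover from this obtain b pf where "b \<in> verts B" "f b = g y" "ord B b = ord A (g y)"
        "bij_betw pf (components A (verts A - {g y})) (components B (verts B - {b}))"
        "\<forall>Ai\<in>components A (verts A - {g y}). {x \<in> verts B. f x \<in> Ai} \<subseteq> pf Ai"
      using f_coherent g.h_verts[OF y(1)] y(2) unfolding coherent_def point_of_coherence_def by auto
    ultimately show ?thesis
      using coherence_point_h2_hub[OF y(1) False _ _ y(2)] g.h_verts[OF y(1)] y(1)
      by (simp add: coherence_bijection_def coherence_bijection_axioms_def
          f.monotone_tree_epi_axioms g.monotone_tree_epi_axioms)
  qed (use coherence_point_h2_off_hub y in blast)
qed

lemma h1_coherent: "coherent D B h1"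
  unfolding coherent_def using coherence_point_h1 by blast

lemma D_commutes: "n \<in> verts D \<Longrightarrow> f (h1 n) = g (h2 n)"
  using verts_D_props by blast

theorem amalgam_exists:
  "\<exists>D\<in>GP P. \<exists>h1 h2. GP_mor P D B h1 \<and> GP_mor P D C h2 \<and> (\<forall>d\<in>verts D. f (h1 d) = g (h2 d))"
proof -
  have "GP_mor P D B h1" unfolding GP_mor_def using D_GP B_GP h1_monotone h1_coherent by auto
  moreover have "GP_mor P D C h2" unfolding GP_mor_def using D_GP C_GP h2_monotone h2_coherent
    by auto
  ultimately show ?thesis using D_GP D_commutes by blast
qed

end


section \<open>Amalgamation and the projective Fraisse property\<close>

lemma GP_mor_const:
  assumes X: "X \<in> GP P" and T: "T \<in> GP P" and t: "verts T = {t}"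
  shows "GP_mor P X T (\<lambda>_. t)"
proof -
  have GX: "is_graph X" and GT: "is_graph T" using X T GP_is_tree tree_is_graph by auto
  have cX: "connected_in X (verts X)" using X GP_is_tree unfolding is_tree_def by auto
  then obtain x0 where x0: "x0 \<in> verts X" unfolding connected_in_def by auto
  have "epi X T (\<lambda>_. t)" unfolding epi_def
    using t x0 is_graphD(3)[OF GT] is_graphD(3)[OF GX x0] by auto
  then have "monotone_epi X T (\<lambda>_. t)" unfolding monotone_epi_def using cX t by auto
  moreover have "ord T t = 0" unfolding ord_def using t by auto
  then have "coherent X T (\<lambda>_. t)" unfolding coherent_def using t by auto
  ultimately show ?thesis unfolding GP_mor_def using X T by auto
qed

definition edge_graph :: graph where
  "edge_graph = ({0, 1}, {0, 1} \<times> {0, 1})"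

lemma edge_graph_verts: "verts edge_graph = {0, 1}"
  and edge_graph_edges: "edges edge_graph = {0, 1} \<times> {0, 1}"
  by (simp_all add: edge_graph_def verts_def edges_def)

lemma edge_graph_ord: "v \<in> verts edge_graph \<Longrightarrow> ord edge_graph v = 1"
proof -
  assume "v \<in> verts edge_graph"
  then have "nbrs edge_graph v = {1 - v}"
    unfolding nbrs_def edge_graph_verts edge_graph_edges by auto
  then show ?thesis by (simp add: ord_eq_card_nbrs)
qed

lemma edge_graph_GP: "edge_graph \<in> GP P"
proof -
  have "is_graph edge_graph" unfolding is_graph_def edge_graph_verts edge_graph_edges by auto
  moreover have "connected_in edge_graph (verts edge_graph)"
    unfolding connected_in_def edge_graph_verts induced_rel_def edge_graph_edges
    by (auto intro: r_into_rtrancl)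
  moreover have "\<not> has_cycle edge_graph"
    using has_cycle_card[of edge_graph] edge_graph_verts by auto
  ultimately show ?thesis unfolding GP_def is_tree_def using edge_graph_ord by auto
qed

text \<open>Collapsing everything but a leaf \<open>l\<close> maps a tree onto the edge graph.\<close>

lemma GP_mor_onto_edge_graph:
  assumes X: "X \<in> GP P" and c2: "2 \<le> card (verts X)"
  shows "\<exists>k. GP_mor P X edge_graph k"
proof -
  have TX: "is_tree X" using X GP_is_tree by auto
  have GX: "is_graph X" using TX tree_is_graph by auto
  obtain v where v: "v \<in> verts X" using c2 by (metis card.empty ex_in_conv not_numeral_le_zero)
  obtain l where l: "l \<in> verts X" "l \<noteq> v" "ord X l = 1" "connected_in X (verts X - {l})"
    using tree_has_leaf[OF TX v c2] by blast
  obtain p where "nbrs X l = {p}" using l(3) by (auto simp: ord_eq_card_nbrs card_1_singleton_iff)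
  then have pl: "(l, p) \<in> edges X" "(p, l) \<in> edges X" "p \<noteq> l" "p \<in> verts X"
    using is_graphD(4)[OF GX] by (auto simp: nbrs_def)
  define k where "k x = (if x = l then 1 else 0 :: nat)" for x
  have "k ` verts X = {0, 1}"
    using v l(1,2) by (auto simp: k_def image_iff)
  moreover have "(\<exists>b1\<in>verts X. \<exists>b2\<in>verts X. k b1 = a1 \<and> k b2 = a2 \<and> (b1, b2) \<in> edges X)"
    if "a1 \<in> {0, 1}" "a2 \<in> {0, 1}" for a1 a2
    using that v l(1,2) pl is_graphD(3)[OF GX] by (auto simp: k_def)
  ultimately have epi: "epi X edge_graph k"
    unfolding epi_def edge_graph_verts edge_graph_edges by blast
  have "{b \<in> verts X. k b = 1} = {l}" "{b \<in> verts X. k b = 0} = verts X - {l}"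
    using l(1) by (auto simp: k_def)
  then have "monotone_epi X edge_graph k"
    unfolding monotone_epi_def edge_graph_verts using epi l(1,4)
    by (auto simp: connected_in_def)
  moreover have "coherent X edge_graph k" unfolding coherent_def using edge_graph_ord by auto
  ultimately show ?thesis unfolding GP_mor_def using X edge_graph_GP by blast
qed

lemma GP_ord_0_singleton:
  assumes A: "A \<in> GP P" and a: "a \<in> verts A" "ord A a = 0"
  shows "verts A = {a}"
proof (rule ccontr)
  assume "verts A \<noteq> {a}"
  then obtain z where "z \<in> verts A" "z \<noteq> a" using a by blast
  then have "nbrs A a \<noteq> {}" using tree_nbrs_nonempty[OF GP_is_tree[OF A] a(1)] by blast
  then show False
    using a finite_nbrs[OF tree_is_graph[OF GP_is_tree[OF A]]] by (simp add: ord_eq_card_nbrs)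
qed

lemma GP_singleton_if_card_less_2:
  assumes "X \<in> GP P" "\<not> 2 \<le> card (verts X)"
  obtains t where "verts X = {t}"
proof -
  have "verts X \<noteq> {}" "finite (verts X)"
    using assms(1) GP_is_tree tree_is_graph is_graphD(1)
    unfolding is_tree_def connected_in_def by blast+
  then have "card (verts X) = 1" using assms(2) by (cases "card (verts X)") auto
  then show ?thesis using that by (auto simp: card_1_singleton_iff)
qed

text \<open>Over a one-point graph, amalgamate over the edge graph instead (or use a constant map when
  one side is a point itself).\<close>

lemma GP_amalgamation_over_point:
  assumes P_ge_3: "\<forall>p\<in>P. 3 \<le> p" and A: "verts A = {a}"
    and f: "GP_mor P B A f" and g: "GP_mor P C A g"
  shows "\<exists>D\<in>GP P. \<exists>h1 h2. GP_mor P D B h1 \<and> GP_mor P D C h2 \<and> (\<forall>d\<in>verts D. f (h1 d) = g (h2 d))"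
proof -
  have B: "B \<in> GP P" and C: "C \<in> GP P" using f g unfolding GP_mor_def by auto
  have "epi B A f" "epi C A g" using f g unfolding GP_mor_def monotone_epi_def by auto
  then have fa: "\<And>x. x \<in> verts B \<Longrightarrow> f x = a" and ga: "\<And>y. y \<in> verts C \<Longrightarrow> g y = a"
    using epiD(2) A by blast+
  show ?thesis
  proof (cases "2 \<le> card (verts B)")
    case False
    then obtain b where b: "verts B = {b}" using GP_singleton_if_card_less_2[OF B] by blast
    show ?thesis
      using C GP_mor_const[OF C B b] GP_mor_id[OF C] fa ga b
      by (intro bexI[of _ C] exI[of _ "\<lambda>_. b"] exI[of _ id]) auto
  next
    case B2: True
    show ?thesis
    proof (cases "2 \<le> card (verts C)")
      case False
      then obtain c where c: "verts C = {c}" using GP_singleton_if_card_less_2[OF C] by blast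
      show ?thesis
        using B GP_mor_const[OF B C c] GP_mor_id[OF B] fa ga c
        by (intro bexI[of _ B] exI[of _ id] exI[of _ "\<lambda>_. c"]) auto
    next
      case True
      obtain kB kC where "GP_mor P B edge_graph kB" "GP_mor P C edge_graph kC"
        using GP_mor_onto_edge_graph[OF B B2] GP_mor_onto_edge_graph[OF C True] by blast
      then interpret GP_cospan P edge_graph B C kB kC
        using P_ge_3 edge_graph_GP edge_graph_ord by unfold_locales auto
      obtain D h1 h2 where D: "D \<in> GP P" "GP_mor P D B h1" "GP_mor P D C h2"
        using amalgam_exists by blast
      then have "epi D B h1" "epi D C h2" unfolding GP_mor_def monotone_epi_def by auto
      then have "h1 d \<in> verts B" "h2 d \<in> verts C" if "d \<in> verts D" for d
        using that epiD(2) by blast+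
      then show ?thesis using D fa ga by (intro bexI[of _ D] exI[of _ h1] exI[of _ h2]) auto
    qed
  qed
qed

lemma GP_amalgamation:
  assumes P_ge_3: "\<forall>p\<in>P. 3 \<le> p" and A: "A \<in> GP P"
    and f: "GP_mor P B A f" and g: "GP_mor P C A g"
  shows "\<exists>D\<in>GP P. \<exists>h1 h2. GP_mor P D B h1 \<and> GP_mor P D C h2 \<and> (\<forall>d\<in>verts D. f (h1 d) = g (h2 d))"
proof (cases "\<forall>a\<in>verts A. 1 \<le> ord A a")
  case True
  then interpret GP_cospan P A B C f g using assms by unfold_locales
  show ?thesis by (rule amalgam_exists)
next
  case False
  then obtain a where "a \<in> verts A" "ord A a = 0" by force
  then show ?thesis
    using GP_amalgamation_over_point[OF P_ge_3 GP_ord_0_singleton[OF A] f g] by blast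
qed

definition point_graph :: graph where
  "point_graph = ({0}, {(0, 0)})"

lemma point_graph_GP: "point_graph \<in> GP P"
proof -
  have vv: "verts point_graph = {0}" "edges point_graph = {(0, 0)}"
    by (simp_all add: point_graph_def verts_def edges_def)
  have "is_graph point_graph" "connected_in point_graph (verts point_graph)"
    unfolding is_graph_def connected_in_def vv by auto
  moreover have "\<not> has_cycle point_graph" using has_cycle_card[of point_graph] vv by auto
  moreover have "ord point_graph 0 = 0" unfolding ord_def vv by auto
  ultimately show ?thesis unfolding GP_def is_tree_def using vv by auto
qed

text \<open>Joint projection is amalgamation over the one-point graph.\<close>

lemma GP_joint_projection:
  assumes "\<forall>p\<in>P. 3 \<le> p" "A \<in> GP P" "B \<in> GP P"
  shows "\<exists>D\<in>GP P. \<exists>f g. GP_mor P D A f \<and> GP_mor P D B g"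
proof -
  have "verts point_graph = {0}" by (simp add: point_graph_def verts_def)
  then have "GP_mor P A point_graph (\<lambda>_. 0)" "GP_mor P B point_graph (\<lambda>_. 0)"
    using GP_mor_const[OF assms(2) point_graph_GP] GP_mor_const[OF assms(3) point_graph_GP] by auto
  then obtain D h1 h2 where "D \<in> GP P" "GP_mor P D A h1" "GP_mor P D B h2"
    using GP_amalgamation[OF assms(1) point_graph_GP] by blast
  then show ?thesis by blast
qed

theorem mainTheorem6:
  fixes P :: "nat set"
  assumes "\<forall>p\<in>P. 3 \<le> p"
  shows "(\<forall>A\<in>GP P. \<forall>B\<in>GP P. \<forall>C\<in>GP P. \<forall>f g. GP_mor P B A f \<and> GP_mor P C A g \<longrightarrow>
            (\<exists>D\<in>GP P. \<exists>h1 h2. GP_mor P D B h1 \<and> GP_mor P D C h2 \<and>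
               (\<forall>d\<in>verts D. f (h1 d) = g (h2 d))))
         \<and> proj_fraisse_family (GP P) (GP_mor P)"
proof -
  have amalgamation: "proj_amalgamation (GP P) (GP_mor P)"
    unfolding proj_amalgamation_def using GP_amalgamation[OF assms] by blast
  have "graph_iso G G" for G unfolding graph_iso_def by (intro exI[of _ id]) auto
  then have "\<exists>S. countable S \<and> S \<subseteq> GP P \<and> (\<forall>A\<in>GP P. \<exists>A'\<in>S. graph_iso A A')"
    using countable_GP by blast
  moreover have "\<forall>G\<in>GP P. is_graph G" using GP_is_tree tree_is_graph by blast
  moreover have "\<forall>B A f. GP_mor P B A f \<longrightarrow> B \<in> GP P \<and> A \<in> GP P \<and> epi B A f"
    unfolding GP_mor_def monotone_epi_def by blast
  ultimately have "proj_fraisse_family (GP P) (GP_mor P)"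
    unfolding proj_fraisse_family_def
    using GP_mor_id GP_mor_comp GP_joint_projection[OF assms] amalgamation by blast
  then show ?thesis using amalgamation unfolding proj_amalgamation_def by blast
qed

end
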